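(* For $\omega>0$ small, there exist smooth functions $K_2,K_1,K_0$ on $\mathbb{R}$ such that, with \[ K=\partial_y^4-2\partial_y^2+K_2\partial_y^2+K_1\partial_y+K_0+1, \] one has the operator identity $U M_+M_-=KU$, and for all $k\ge0$, on $\mathbb{R}$, \[ |\partial_y^kK_2|+|\partial_y^kK_1|+|\partial_y^kK_0|\lesssim \omega e^{-(\kappa-\alpha)|y|}. \]
   Context: For $\omega\ge0$, $Q_\omega(y)=\sqrt{4/(1+a_\omega\cosh 2y)}$, $a_\omega=\sqrt{1+\tfrac{16}{3}\omega}$, and $M_+=-\partial_y^2+1+\tfrac{\omega}{3}Q_\omega^4$, $M_-=-\partial_y^2+1-\omega Q_\omega^4$. For $\omega\in(0,\omega_1)$ ($\omega_1>0$ small), $\alpha=\alpha(\omega)>0$ is smooth with $\alpha=\tfrac89\omega+O(\omega^2)$, $\lambda=1-\alpha^2$, $\kappa=\sqrt{2-\alpha^2}$, and $W_1,W_2$ are smooth real functions of $(\omega,y)$, even in $y$, satisfying $M_+W_1=\lambda W_2$, $M_-W_2=\lambda W_1$ and, for $j=1,2$, all $k\ge0$, on $\mathbb{R}$: $|\partial_y^kW_j|\lesssim\omega^ke^{-\alpha|y|}+\omega e^{-|y|}$, $|\partial_y^k(W_1-W_2)|\lesssim\omega e^{-\kappa|y|}$, $|W_j-e^{-\alpha|y|}|\lesssim\omega e^{-\alpha|y|}$ (these are the internal-mode eigenfunctions of the transformed linearized problem of the cubic-quintic NLS around $Q_\omega$). In particular $W_2>0$; set $U=\partial_y-W_2'/W_2$.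 The notation $\lesssim$ means $\le C\,\cdot$ with $C$ independent of $\omega$ and $y$ (possibly depending on $k$). *)

theory Defs
  imports "HOL-Analysis.Analysis"
begin

definition Dk :: "nat \<Rightarrow> (real \<Rightarrow> real) \<Rightarrow> real \<Rightarrow> real" where
  "Dk k f = (deriv ^^ k) f"

definition smooth_fun :: "(real \<Rightarrow> real) \<Rightarrow> bool" where
  "smooth_fun f \<longleftrightarrow> (\<forall>k x. Dk k f differentiable (at x))"

definition smooth_on1 :: "real set \<Rightarrow> (real \<Rightarrow> real) \<Rightarrow> bool" where
  "smooth_on1 S f \<longleftrightarrow> (\<forall>k. \<forall>x\<in>S. Dk k f differentiable (at x))"

definition pd_w :: "(real \<Rightarrow> real \<Rightarrow> real) \<Rightarrow> real \<Rightarrow> real \<Rightarrow> real" where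
  "pd_w F = (\<lambda>w y. deriv (\<lambda>w'. F w' y) w)"

definition pd_y :: "(real \<Rightarrow> real \<Rightarrow> real) \<Rightarrow> real \<Rightarrow> real \<Rightarrow> real" where
  "pd_y F = (\<lambda>w y. deriv (F w) y)"

definition iter_pd :: "bool list \<Rightarrow> (real \<Rightarrow> real \<Rightarrow> real) \<Rightarrow> real \<Rightarrow> real \<Rightarrow> real" where
  "iter_pd ds F = fold (\<lambda>d G. if d then pd_w G else pd_y G) ds F"

definition smooth2_on :: "(real \<times> real) set \<Rightarrow> (real \<Rightarrow> real \<Rightarrow> real) \<Rightarrow> bool" where
  "smooth2_on S F \<longleftrightarrow> (\<forall>ds. continuous_on S (\<lambda>p. iter_pd ds F (fst p) (snd p)) \<and>
      (\<forall>p\<in>S. (\<lambda>w'. iter_pd ds F w' (snd p)) differentiable (at (fst p)) \<and>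
              iter_pd ds F (fst p) differentiable (at (snd p))))"

definition a_om :: "real \<Rightarrow> real" where
  "a_om w = sqrt (1 + 16/3 * w)"

definition Q_om :: "real \<Rightarrow> real \<Rightarrow> real" where
  "Q_om w y = sqrt (4 / (1 + a_om w * cosh (2 * y)))"

definition Mplus :: "real \<Rightarrow> (real \<Rightarrow> real) \<Rightarrow> real \<Rightarrow> real" where
  "Mplus w f = (\<lambda>y. - Dk 2 f y + f y + w / 3 * Q_om w y ^ 4 * f y)"

definition Mminus :: "real \<Rightarrow> (real \<Rightarrow> real) \<Rightarrow> real \<Rightarrow> real" where
  "Mminus w f = (\<lambda>y. - Dk 2 f y + f y - w * Q_om w y ^ 4 * f y)"

definition Uop :: "(real \<Rightarrow> real) \<Rightarrow> (real \<Rightarrow> real) \<Rightarrow> real \<Rightarrow> real" where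
  "Uop W f = (\<lambda>y. deriv f y - deriv W y / W y * f y)"

definition Kop :: "(real \<Rightarrow> real) \<Rightarrow> (real \<Rightarrow> real) \<Rightarrow> (real \<Rightarrow> real) \<Rightarrow> (real \<Rightarrow> real) \<Rightarrow> real \<Rightarrow> real" where
  "Kop K2 K1 K0 f = (\<lambda>y. Dk 4 f y - 2 * Dk 2 f y + K2 y * Dk 2 f y + K1 y * Dk 1 f y
                          + K0 y * f y + f y)"

end

theory Submission
  imports Defs
begin

text \<open>
  Write \<open>q = W2'/W2\<close>, so that \<open>U = \<partial> - q\<close>, and \<open>M\<^sub>\<plusminus> = -\<partial>\<^sup>2 + 1 + V\<^sub>\<plusminus>\<close> with
  \<open>V\<^sub>- = -\<omega>Q\<^sup>4\<close> and \<open>V\<^sub>+ = \<omega>Q\<^sup>4/3\<close>. Commuting \<open>U\<close> through \<open>M\<^sub>+M\<^sub>-\<close> gives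
  \<open>U M\<^sub>+M\<^sub>- f = K U f + R f\<close>, where the coefficients of \<open>K\<close> and the remainder \<open>R\<close> are explicit
  polynomials in \<open>q\<close>, \<open>V\<^sub>\<plusminus>\<close> and their derivatives. Both sides annihilate \<open>W2\<close>, since
  \<open>U W2 = 0\<close> and \<open>M\<^sub>+M\<^sub>-W2 = \<lambda>\<^sup>2W2\<close>; hence \<open>R = 0\<close>.

  Every term of \<open>K2, K1, K0\<close> contains a factor \<open>V\<^sub>\<plusminus>\<close> or a derivative of \<open>q\<close>, while \<open>q\<close> itself
  is bounded and \<open>V\<^sub>\<plusminus> = O(\<omega> exp(-4|y|))\<close>. For \<open>q'\<close> use the Riccati equation
  \<open>q' = \<alpha>\<^sup>2 - q\<^sup>2 + V\<^sub>- - \<lambda>(W1 - W2)/W2\<close>. Here \<open>q\<^sup>2 - \<alpha>\<^sup>2 = E/W2\<^sup>2\<close> with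
  \<open>E = W2'\<^sup>2 - \<alpha>\<^sup>2W2\<^sup>2\<close>, and \<open>E' = 2W2'(V\<^sub>-W2 - \<lambda>(W1 - W2)) = O(\<omega> exp(-(\<alpha>+\<kappa>)|y|))\<close>;
  integrating from \<open>\<plusminus>\<infinity>\<close> bounds \<open>E\<close> by the same weight, and the lower bound
  \<open>W2 \<ge> exp(-\<alpha>|y|)/2\<close>, valid for small \<open>\<omega>\<close>, turns this into \<open>q' = O(\<omega> exp(-(\<kappa>-\<alpha>)|y|))\<close>.
  Differentiating the Riccati equation carries the bound over to all derivatives of \<open>q'\<close>.
\<close>

lemma Dk_0 [simp]: "Dk 0 f = f"
  by (simp add: Dk_def)

lemma Dk_Suc: "Dk (Suc k) f = Dk k (deriv f)"
  by (simp only: Dk_def funpow_Suc_right comp_def)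

lemma Dk_Suc_outer: "Dk (Suc k) f = deriv (Dk k f)"
  by (simp add: Dk_def)

lemma Dk_1 [simp]: "Dk 1 f = deriv f"
  by (simp add: Dk_def)

lemma Dk_Suc_0 [simp]: "Dk (Suc 0) f = deriv f"
  by (simp add: Dk_def)

lemma Dk_numeral [simp]: "Dk (numeral n) f = deriv (Dk (pred_numeral n) f)"
  by (simp add: numeral_eq_Suc Dk_Suc_outer)

lemma Dk_Suc_const: "Dk (Suc j) (\<lambda>y. c :: real) = (\<lambda>y. 0)"
  by (induction j) (simp_all add: Dk_Suc_outer)

lemma real_differentiable_iff_field_differentiable:
  "(f :: real \<Rightarrow> real) differentiable at x \<longleftrightarrow> f field_differentiable at x"
  by (simp add: field_differentiable_def real_differentiable_def)

lemma has_real_derivative_imp_differentiable: "(f has_real_derivative D) (at x) \<Longrightarrow> f differentiable at x"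
  by (auto simp: real_differentiable_def)

lemma deriv_add_fun:
  fixes f g :: "real \<Rightarrow> real"
  assumes "\<And>x. f differentiable at x" "\<And>x. g differentiable at x"
  shows "deriv (\<lambda>y. f y + g y) = (\<lambda>y. deriv f y + deriv g y)"
  using assms by (intro ext deriv_add) (simp_all add: real_differentiable_iff_field_differentiable)

lemma deriv_mult_fun:
  fixes f g :: "real \<Rightarrow> real"
  assumes "\<And>x. f differentiable at x" "\<And>x. g differentiable at x"
  shows "deriv (\<lambda>y. f y * g y) = (\<lambda>y. f y * deriv g y + deriv f y * g y)"
  using assms by (intro ext deriv_mult) (simp_all add: real_differentiable_iff_field_differentiable)

lemma all_le_Suc_iff: "(\<forall>j\<le>Suc n. P j) \<longleftrightarrow> P 0 \<and> (\<forall>j\<le>n. P (Suc j))"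
  by (metis Suc_le_mono le0 not0_implies_Suc)

definition differentiable_upto :: "nat \<Rightarrow> (real \<Rightarrow> real) \<Rightarrow> bool" where
  "differentiable_upto n f \<longleftrightarrow> (\<forall>j\<le>n. \<forall>x. Dk j f differentiable at x)"

lemma differentiable_upto_0: "differentiable_upto 0 f \<longleftrightarrow> (\<forall>x. f differentiable at x)"
  by (simp add: differentiable_upto_def)

lemma differentiable_upto_Suc:
  "differentiable_upto (Suc n) f \<longleftrightarrow> (\<forall>x. f differentiable at x) \<and> differentiable_upto n (deriv f)"
  unfolding differentiable_upto_def all_le_Suc_iff Dk_Suc by simp

lemma differentiable_upto_mono: "differentiable_upto n f \<Longrightarrow> m \<le> n \<Longrightarrow> differentiable_upto m f"
  unfolding differentiable_upto_def by simp

lemma smooth_fun_iff_differentiable_upto: "smooth_fun f \<longleftrightarrow> (\<forall>n. differentiable_upto n f)"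
  unfolding smooth_fun_def differentiable_upto_def by blast

lemma differentiable_upto_add:
  "differentiable_upto n f \<Longrightarrow> differentiable_upto n g \<Longrightarrow> differentiable_upto n (\<lambda>y. f y + g y)"
proof (induction n arbitrary: f g)
  case 0
  then show ?case by (simp add: differentiable_upto_0 differentiable_add)
next
  case (Suc n)
  then have "deriv (\<lambda>y. f y + g y) = (\<lambda>y. deriv f y + deriv g y)"
    by (intro deriv_add_fun) (simp_all add: differentiable_upto_Suc)
  with Suc show ?case
    by (simp add: differentiable_upto_Suc differentiable_add)
qed

lemma differentiable_upto_mult:
  "differentiable_upto n f \<Longrightarrow> differentiable_upto n g \<Longrightarrow> differentiable_upto n (\<lambda>y. f y * g y)"
proof (induction n arbitrary: f g)
  case 0
  then show ?case by (simp add: differentiable_upto_0 differentiable_mult)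
next
  case (Suc n)
  then have "differentiable_upto n f" "differentiable_upto n g"
    using differentiable_upto_mono le_SucI by blast+
  with Suc have "differentiable_upto n (\<lambda>y. f y * deriv g y + deriv f y * g y)"
    by (simp add: differentiable_upto_Suc differentiable_upto_add)
  moreover have "deriv (\<lambda>y. f y * g y) = (\<lambda>y. f y * deriv g y + deriv f y * g y)"
    using Suc.prems by (intro deriv_mult_fun) (simp_all add: differentiable_upto_Suc)
  ultimately show ?case
    using Suc.prems by (simp add: differentiable_upto_Suc differentiable_mult)
qed

lemma differentiable_upto_const: "differentiable_upto n (\<lambda>y. c)"
  unfolding differentiable_upto_def
proof (intro allI impI)
  fix j x show "Dk j (\<lambda>y. c) differentiable at x"
    by (cases j) (simp_all add: Dk_Suc_const)
qed

lemma smooth_fun_add [simp]: "smooth_fun f \<Longrightarrow> smooth_fun g \<Longrightarrow> smooth_fun (\<lambda>y. f y + g y)"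
  by (simp add: smooth_fun_iff_differentiable_upto differentiable_upto_add)

lemma smooth_fun_mult [simp]: "smooth_fun f \<Longrightarrow> smooth_fun g \<Longrightarrow> smooth_fun (\<lambda>y. f y * g y)"
  by (simp add: smooth_fun_iff_differentiable_upto differentiable_upto_mult)

lemma smooth_fun_const [simp]: "smooth_fun (\<lambda>y. c)"
  by (simp add: smooth_fun_iff_differentiable_upto differentiable_upto_const)

lemma smooth_fun_cmult [simp]: "smooth_fun f \<Longrightarrow> smooth_fun (\<lambda>y. c * f y)"
  using smooth_fun_mult[of "\<lambda>y. c" f] by simp

lemma smooth_fun_minus [simp]: "smooth_fun f \<Longrightarrow> smooth_fun (\<lambda>y. - f y)"
  using smooth_fun_cmult[of f "-1"] by simp

lemma smooth_fun_diff [simp]: "smooth_fun f \<Longrightarrow> smooth_fun g \<Longrightarrow> smooth_fun (\<lambda>y. f y - g y)"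
  using smooth_fun_add[of f "\<lambda>y. - g y"] by simp

lemma smooth_fun_deriv [simp]: "smooth_fun f \<Longrightarrow> smooth_fun (deriv f)"
  by (metis smooth_fun_iff_differentiable_upto differentiable_upto_Suc)

lemma smooth_fun_differentiable: "smooth_fun f \<Longrightarrow> f differentiable at x"
  by (metis smooth_fun_iff_differentiable_upto differentiable_upto_Suc)

lemma smooth_fun_has_deriv: "smooth_fun f \<Longrightarrow> (f has_real_derivative deriv f y) (at y)"
  using smooth_fun_differentiable DERIV_deriv_iff_real_differentiable by blast

lemma deriv_add_smooth [simp]:
  "smooth_fun f \<Longrightarrow> smooth_fun g \<Longrightarrow> deriv (\<lambda>y. f y + g y) = (\<lambda>y. deriv f y + deriv g y)"
  by (intro deriv_add_fun smooth_fun_differentiable)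

lemma deriv_mult_smooth [simp]:
  "smooth_fun f \<Longrightarrow> smooth_fun g \<Longrightarrow> deriv (\<lambda>y. f y * g y) = (\<lambda>y. f y * deriv g y + deriv f y * g y)"
  by (intro deriv_mult_fun smooth_fun_differentiable)

lemma deriv_cmult_smooth [simp]: "smooth_fun f \<Longrightarrow> deriv (\<lambda>y. c * f y) = (\<lambda>y. c * deriv f y)"
  using deriv_mult_smooth[of "\<lambda>y. c" f] by simp

lemma deriv_minus_smooth [simp]: "smooth_fun f \<Longrightarrow> deriv (\<lambda>y. - f y) = (\<lambda>y. - deriv f y)"
  using deriv_cmult_smooth[of f "-1"] by simp

lemma deriv_diff_smooth [simp]:
  "smooth_fun f \<Longrightarrow> smooth_fun g \<Longrightarrow> deriv (\<lambda>y. f y - g y) = (\<lambda>y. deriv f y - deriv g y)"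
  using deriv_add_smooth[of f "\<lambda>y. - g y"] by simp

section \<open>Uniform bounds on derivatives\<close>

definition deriv_dominated ::
    "real set \<Rightarrow> nat \<Rightarrow> (real \<Rightarrow> real \<Rightarrow> real) \<Rightarrow> (real \<Rightarrow> real \<Rightarrow> real) \<Rightarrow> bool" where
  "deriv_dominated I n B f \<longleftrightarrow> (\<forall>w\<in>I. differentiable_upto n (f w)) \<and>
     (\<forall>j\<le>n. \<exists>C\<ge>0. \<forall>w\<in>I. \<forall>y. \<bar>Dk j (f w) y\<bar> \<le> C * B w y)"

lemma deriv_dominated_0:
  "deriv_dominated I 0 B f \<longleftrightarrow>
     (\<forall>w\<in>I. \<forall>x. f w differentiable at x) \<and> (\<exists>C\<ge>0. \<forall>w\<in>I. \<forall>y. \<bar>f w y\<bar> \<le> C * B w y)"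
  by (simp add: deriv_dominated_def differentiable_upto_0)

lemma deriv_dominated_Suc:
  "deriv_dominated I (Suc n) B f \<longleftrightarrow> deriv_dominated I 0 B f \<and> deriv_dominated I n B (\<lambda>w. deriv (f w))"
  unfolding deriv_dominated_def differentiable_upto_Suc all_le_Suc_iff Dk_Suc differentiable_upto_0
  by auto

lemma deriv_dominated_deriv: "deriv_dominated I (Suc n) B f \<Longrightarrow> deriv_dominated I n B (\<lambda>w. deriv (f w))"
  by (simp add: deriv_dominated_Suc)

lemma deriv_dominated_mono: "deriv_dominated I n B f \<Longrightarrow> m \<le> n \<Longrightarrow> deriv_dominated I m B f"
  unfolding deriv_dominated_def by (meson differentiable_upto_mono order_trans)

lemma deriv_dominated_cong:
  "deriv_dominated I n B f \<Longrightarrow> (\<And>w. w \<in> I \<Longrightarrow> f w = g w) \<Longrightarrow> deriv_dominated I n B g"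
  unfolding deriv_dominated_def by auto

lemma deriv_dominated_differentiable:
  "deriv_dominated I n B f \<Longrightarrow> w \<in> I \<Longrightarrow> f w differentiable at x"
  unfolding deriv_dominated_def differentiable_upto_def by (metis Dk_0 le0)

lemma deriv_dominated_bound:
  "deriv_dominated I k B f \<Longrightarrow> \<exists>C\<ge>0. \<forall>w\<in>I. \<forall>y. \<bar>Dk k (f w) y\<bar> \<le> C * B w y"
  unfolding deriv_dominated_def by blast

lemma deriv_dominated_smooth: "(\<And>n. deriv_dominated I n B f) \<Longrightarrow> w \<in> I \<Longrightarrow> smooth_fun (f w)"
  unfolding smooth_fun_iff_differentiable_upto deriv_dominated_def by blast

lemma deriv_dominatedI:
  assumes "\<And>w. w \<in> I \<Longrightarrow> smooth_fun (f w)"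
    and "\<And>j. j \<le> n \<Longrightarrow> \<exists>C. \<forall>w\<in>I. \<forall>y. \<bar>Dk j (f w) y\<bar> \<le> C * B w y"
    and "\<And>w y. w \<in> I \<Longrightarrow> 0 \<le> B w y"
  shows "deriv_dominated I n B f"
  unfolding deriv_dominated_def
proof (intro conjI ballI allI impI)
  show "differentiable_upto n (f w)" if "w \<in> I" for w
    using assms(1)[OF that] smooth_fun_iff_differentiable_upto by blast
  fix j assume "j \<le> n"
  then obtain C where C: "\<forall>w\<in>I. \<forall>y. \<bar>Dk j (f w) y\<bar> \<le> C * B w y"
    using assms(2) by blast
  have "C * B w y \<le> max C 0 * B w y" if "w \<in> I" for w y
    using assms(3)[OF that] by (intro mult_right_mono) auto
  with C show "\<exists>C\<ge>0. \<forall>w\<in>I. \<forall>y. \<bar>Dk j (f w) y\<bar> \<le> C * B w y"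
    by (intro exI[of _ "max C 0"]) (meson max.cobounded2 order_trans)
qed

lemma deriv_dominated_weaken:
  assumes "deriv_dominated I n B f" "\<And>w y. w \<in> I \<Longrightarrow> B w y \<le> B' w y"
  shows "deriv_dominated I n B' f"
  unfolding deriv_dominated_def
proof (intro conjI allI impI)
  show "\<forall>w\<in>I. differentiable_upto n (f w)"
    using assms(1) unfolding deriv_dominated_def by blast
  fix j assume "j \<le> n"
  then obtain C where "C \<ge> 0" "\<forall>w\<in>I. \<forall>y. \<bar>Dk j (f w) y\<bar> \<le> C * B w y"
    using assms(1) unfolding deriv_dominated_def by blast
  with assms(2) show "\<exists>C\<ge>0. \<forall>w\<in>I. \<forall>y. \<bar>Dk j (f w) y\<bar> \<le> C * B' w y"
    by (meson mult_left_mono order_trans)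
qed

lemma deriv_dominated_add0:
  assumes "deriv_dominated I 0 B f" "deriv_dominated I 0 B g"
  shows "deriv_dominated I 0 B (\<lambda>w y. f w y + g w y)"
proof -
  obtain C1 C2 where "C1 \<ge> 0" "C2 \<ge> 0" "\<forall>w\<in>I. \<forall>y. \<bar>f w y\<bar> \<le> C1 * B w y"
      "\<forall>w\<in>I. \<forall>y. \<bar>g w y\<bar> \<le> C2 * B w y"
    using assms unfolding deriv_dominated_0 by blast
  then have "\<forall>w\<in>I. \<forall>y. \<bar>f w y + g w y\<bar> \<le> (C1 + C2) * B w y"
    by (smt (verit, best) distrib_right)
  with assms \<open>C1 \<ge> 0\<close> \<open>C2 \<ge> 0\<close> show ?thesis
    unfolding deriv_dominated_0 by (auto intro!: exI[of _ "C1 + C2"])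
qed

lemma deriv_dominated_add:
  "deriv_dominated I n B f \<Longrightarrow> deriv_dominated I n B g \<Longrightarrow> deriv_dominated I n B (\<lambda>w y. f w y + g w y)"
proof (induction n arbitrary: f g)
  case 0
  then show ?case by (rule deriv_dominated_add0)
next
  case (Suc n)
  have "deriv_dominated I n B (\<lambda>w y. deriv (f w) y + deriv (g w) y)"
    using Suc unfolding deriv_dominated_Suc by blast
  then have "deriv_dominated I n B (\<lambda>w. deriv (\<lambda>y. f w y + g w y))"
    by (rule deriv_dominated_cong)
       (simp add: deriv_add_fun deriv_dominated_differentiable[OF Suc.prems(1)]
         deriv_dominated_differentiable[OF Suc.prems(2)])
  with Suc.prems show ?case
    unfolding deriv_dominated_Suc by (simp add: deriv_dominated_add0)
qed

lemma deriv_dominated_mult0: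
  assumes "deriv_dominated I 0 B1 f" "deriv_dominated I 0 B2 g"
  shows "deriv_dominated I 0 (\<lambda>w y. B1 w y * B2 w y) (\<lambda>w y. f w y * g w y)"
proof -
  obtain C1 C2 where C: "C1 \<ge> 0" "C2 \<ge> 0" "\<forall>w\<in>I. \<forall>y. \<bar>f w y\<bar> \<le> C1 * B1 w y"
      "\<forall>w\<in>I. \<forall>y. \<bar>g w y\<bar> \<le> C2 * B2 w y"
    using assms unfolding deriv_dominated_0 by blast
  have "\<bar>f w y * g w y\<bar> \<le> (C1 * C2) * (B1 w y * B2 w y)" if "w \<in> I" for w y
  proof -
    have "\<bar>f w y\<bar> * \<bar>g w y\<bar> \<le> (C1 * B1 w y) * (C2 * B2 w y)"
      using C that by (intro mult_mono) (auto intro: order_trans[OF abs_ge_zero])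
    then show ?thesis by (simp add: abs_mult mult_ac)
  qed
  with assms C(1,2) show ?thesis
    unfolding deriv_dominated_0 by (auto intro!: differentiable_mult exI[of _ "C1 * C2"])
qed

lemma deriv_dominated_mult:
  "deriv_dominated I n B1 f \<Longrightarrow> deriv_dominated I n B2 g \<Longrightarrow>
   deriv_dominated I n (\<lambda>w y. B1 w y * B2 w y) (\<lambda>w y. f w y * g w y)"
proof (induction n arbitrary: f g)
  case 0
  then show ?case by (rule deriv_dominated_mult0)
next
  case (Suc n)
  have fg: "deriv_dominated I n B1 f" "deriv_dominated I n B2 g"
    using Suc.prems deriv_dominated_mono le_SucI by blast+
  have "deriv_dominated I n (\<lambda>w y. B1 w y * B2 w y) (\<lambda>w y. f w y * deriv (g w) y + deriv (f w) y * g w y)"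
    by (intro deriv_dominated_add Suc.IH fg deriv_dominated_deriv Suc.prems)
  then have "deriv_dominated I n (\<lambda>w y. B1 w y * B2 w y) (\<lambda>w. deriv (\<lambda>y. f w y * g w y))"
    by (rule deriv_dominated_cong)
       (simp add: deriv_mult_fun deriv_dominated_differentiable[OF Suc.prems(1)]
         deriv_dominated_differentiable[OF Suc.prems(2)])
  with Suc.prems show ?case
    unfolding deriv_dominated_Suc by (simp add: deriv_dominated_mult0)
qed

lemma deriv_dominated_const:
  assumes "\<And>w. w \<in> I \<Longrightarrow> \<bar>c w\<bar> \<le> M * b w" "\<And>w. w \<in> I \<Longrightarrow> 0 \<le> b w"
  shows "deriv_dominated I n (\<lambda>w y. b w) (\<lambda>w y. c w)"
proof (rule deriv_dominatedI)
  fix j :: nat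
  show "\<exists>C. \<forall>w\<in>I. \<forall>y. \<bar>Dk j (\<lambda>y. c w) y\<bar> \<le> C * b w"
    using assms by (cases j) (auto simp: Dk_Suc_const intro: exI[of _ 0])
qed (use assms(2) in auto)

lemma deriv_dominated_scale:
  assumes "deriv_dominated I n B f"
  shows "deriv_dominated I n B (\<lambda>w y. c * f w y)"
proof -
  have "deriv_dominated I n (\<lambda>w y. 1 * B w y) (\<lambda>w y. c * f w y)"
    by (rule deriv_dominated_mult[OF deriv_dominated_const[of I "\<lambda>w. c" "\<bar>c\<bar>"] assms]) auto
  then show ?thesis by simp
qed

lemma deriv_dominated_diff:
  "deriv_dominated I n B f \<Longrightarrow> deriv_dominated I n B g \<Longrightarrow> deriv_dominated I n B (\<lambda>w y. f w y - g w y)"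
  using deriv_dominated_add[of I n B f "\<lambda>w y. (- 1) * g w y"] deriv_dominated_scale[of I n B g "- 1"]
  by simp

lemma deriv_dominated_mult_bounded:
  assumes "deriv_dominated I n B f" "deriv_dominated I n (\<lambda>w y. 1) g"
  shows "deriv_dominated I n B (\<lambda>w y. f w y * g w y)"
  using deriv_dominated_mult[OF assms] by simp

lemma deriv_dominated_bounded_mult:
  assumes "deriv_dominated I n (\<lambda>w y. 1) g" "deriv_dominated I n B f"
  shows "deriv_dominated I n B (\<lambda>w y. g w y * f w y)"
  using deriv_dominated_mult[OF assms] by simp

lemma deriv_dominated_cmult:
  assumes "\<And>w. w \<in> I \<Longrightarrow> \<bar>c w\<bar> \<le> M" "deriv_dominated I n B f"
  shows "deriv_dominated I n B (\<lambda>w y. c w * f w y)"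
proof (rule deriv_dominated_bounded_mult[OF _ assms(2)])
  show "deriv_dominated I n (\<lambda>w y. 1) (\<lambda>w y. c w)"
    by (rule deriv_dominated_const[of _ _ M]) (use assms(1) in auto)
qed

lemma deriv_dominated_mult_small:
  assumes "\<And>w y. w \<in> I \<Longrightarrow> 0 \<le> B w y \<and> B w y \<le> 1"
    and "deriv_dominated I n B f" "deriv_dominated I n B g"
  shows "deriv_dominated I n B (\<lambda>w y. f w y * g w y)"
  using deriv_dominated_mult[OF assms(2,3)]
  by (rule deriv_dominated_weaken) (use assms(1) in \<open>simp add: mult_left_le_one_le\<close>)

section \<open>Decay from a decaying derivative\<close>

lemma abs_le_exp_decay_at_top:
  fixes g g' :: "real \<Rightarrow> real"
  assumes deriv: "\<And>y. (g has_real_derivative g' y) (at y)" and lim: "(g \<longlongrightarrow> 0) at_top"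
    and c: "c > 0" and deriv_bound: "\<And>y. y \<ge> 0 \<Longrightarrow> \<bar>g' y\<bar> \<le> M * exp (- c * y)" and y: "y \<ge> 0"
  shows "\<bar>g y\<bar> \<le> M / c * exp (- c * y)"
proof -
  define h where "h t = M / c * exp (- c * t)" for t
  have h_lim: "(h \<longlongrightarrow> 0) at_top"
    unfolding h_def using c by real_asymp
  have h_deriv: "(h has_real_derivative - M * exp (- c * t)) (at t)" for t
    unfolding h_def using c by (auto intro!: derivative_eq_intros)
  have upper: "g t + h t \<le> g y + h y" if "t \<ge> y" for t
  proof (rule DERIV_nonpos_imp_nonincreasing[OF that])
    fix x assume "y \<le> x" "x \<le> t"
    then have "\<bar>g' x\<bar> \<le> M * exp (- c * x)" using deriv_bound y by auto
    then show "\<exists>z. ((\<lambda>t. g t + h t) has_real_derivative z) (at x) \<and> z \<le> 0"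
      using DERIV_add[OF deriv h_deriv] by (intro exI[of _ "g' x + - M * exp (- c * x)"]) auto
  qed
  have lower: "g y - h y \<le> g t - h t" if "t \<ge> y" for t
  proof (rule DERIV_nonneg_imp_nondecreasing[OF that])
    fix x assume "y \<le> x" "x \<le> t"
    then have "\<bar>g' x\<bar> \<le> M * exp (- c * x)" using deriv_bound y by auto
    then show "\<exists>z. ((\<lambda>t. g t - h t) has_real_derivative z) (at x) \<and> z \<ge> 0"
      using DERIV_diff[OF deriv h_deriv] by (intro exI[of _ "g' x - - M * exp (- c * x)"]) auto
  qed
  have "0 \<le> g y + h y"
    by (rule tendsto_upperbound[OF tendsto_add[OF lim h_lim, simplified]])
       (use upper in \<open>auto simp: eventually_at_top_linorder\<close>)
  moreover have "g y - h y \<le> 0"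
    by (rule tendsto_lowerbound[OF tendsto_diff[OF lim h_lim, simplified]])
       (use lower in \<open>auto simp: eventually_at_top_linorder\<close>)
  ultimately show ?thesis unfolding h_def by linarith
qed

lemma abs_le_exp_decay:
  fixes g g' :: "real \<Rightarrow> real"
  assumes deriv: "\<And>y. (g has_real_derivative g' y) (at y)"
    and lim_top: "(g \<longlongrightarrow> 0) at_top" and lim_bot: "(g \<longlongrightarrow> 0) at_bot"
    and c: "c > 0" and deriv_bound: "\<And>y. \<bar>g' y\<bar> \<le> M * exp (- c * \<bar>y\<bar>)"
  shows "\<bar>g y\<bar> \<le> M / c * exp (- c * \<bar>y\<bar>)"
proof (cases "y \<ge> 0")
  case True
  have "\<bar>g y\<bar> \<le> M / c * exp (- c * y)"
    by (rule abs_le_exp_decay_at_top[OF deriv lim_top c _ True]) (metis abs_of_nonneg deriv_bound)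
  with True show ?thesis by simp
next
  case False
  have "((\<lambda>x. g (- x)) has_real_derivative - g' (- x)) (at x)" for x
    using deriv[of "- x"] DERIV_mirror by simp
  moreover have "((\<lambda>x. g (- x)) \<longlongrightarrow> 0) at_top"
    using lim_bot by (simp add: filterlim_at_bot_mirror)
  ultimately have "\<bar>g (- (- y))\<bar> \<le> M / c * exp (- c * (- y))"
  proof (rule abs_le_exp_decay_at_top)
    show "\<bar>- g' (- t)\<bar> \<le> M * exp (- c * t)" if "t \<ge> 0" for t
      using deriv_bound[of "- t"] that by simp
  qed (use c False in auto)
  with False show ?thesis by simp
qed

lemma tendsto_exp_decay_abs_at_top: "0 < c \<Longrightarrow> ((\<lambda>y. K * exp (- c * \<bar>y\<bar>)) \<longlongrightarrow> 0) at_top"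
  for c K :: real
  by real_asymp

lemma tendsto_exp_decay_abs_at_bot: "0 < c \<Longrightarrow> ((\<lambda>y. K * exp (- c * \<bar>y\<bar>)) \<longlongrightarrow> 0) at_bot"
  for c K :: real
  by real_asymp

lemma abs_le_exp_decay_of_decaying:
  fixes g g' :: "real \<Rightarrow> real"
  assumes deriv: "\<And>y. (g has_real_derivative g' y) (at y)"
    and rough: "\<And>y. \<bar>g y\<bar> \<le> K * exp (- a * \<bar>y\<bar>)" and a: "0 < a"
    and c: "1 \<le> c" and M: "0 \<le> M" and deriv_bound: "\<And>y. \<bar>g' y\<bar> \<le> M * exp (- c * \<bar>y\<bar>)"
  shows "\<bar>g y\<bar> \<le> M * exp (- c * \<bar>y\<bar>)"
proof -
  have bound: "\<forall>\<^sub>F y in F. norm (g y) \<le> K * exp (- a * \<bar>y\<bar>)" for F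
    using rough by (intro always_eventually) simp
  have "(g \<longlongrightarrow> 0) at_top"
    by (rule Lim_null_comparison[OF bound tendsto_exp_decay_abs_at_top[OF a]])
  moreover have "(g \<longlongrightarrow> 0) at_bot"
    by (rule Lim_null_comparison[OF bound tendsto_exp_decay_abs_at_bot[OF a]])
  ultimately have "\<bar>g y\<bar> \<le> M / c * exp (- c * \<bar>y\<bar>)"
    using c deriv_bound by (intro abs_le_exp_decay[OF deriv]) auto
  also have "\<dots> \<le> M / 1 * exp (- c * \<bar>y\<bar>)"
    using c M by (intro mult_right_mono divide_left_mono) auto
  finally show ?thesis by simp
qed

section \<open>The potentials\<close>

lemma cosh_le_exp_abs: "cosh x \<le> exp \<bar>x\<bar>" for x :: real
proof -
  have "cosh x = cosh \<bar>x\<bar>" by simp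
  also have "\<dots> = (exp \<bar>x\<bar> + exp (- \<bar>x\<bar>)) / 2" by (simp add: cosh_field_def)
  also have "\<dots> \<le> exp \<bar>x\<bar>" by simp
  finally show ?thesis .
qed

lemma exp_abs_le_two_cosh: "exp \<bar>x\<bar> \<le> 2 * cosh x" for x :: real
proof -
  have "cosh x = cosh \<bar>x\<bar>" by simp
  also have "\<dots> = (exp \<bar>x\<bar> + exp (- \<bar>x\<bar>)) / 2" by (simp add: cosh_field_def)
  finally have "2 * cosh x = exp \<bar>x\<bar> + exp (- \<bar>x\<bar>)" by simp
  then show ?thesis by (smt (verit) exp_gt_zero)
qed

lemma abs_sinh_le_exp_abs: "\<bar>sinh x\<bar> \<le> exp \<bar>x\<bar>" for x :: real
  using sinh_le_cosh_real[of "\<bar>x\<bar>"] cosh_le_exp_abs[of "\<bar>x\<bar>"] by simp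

lemma deriv_dominated_sinh_cosh:
  "deriv_dominated I n (\<lambda>w y. exp (\<bar>c\<bar> * \<bar>y\<bar>)) (\<lambda>w y. sinh (c * y)) \<and>
   deriv_dominated I n (\<lambda>w y. exp (\<bar>c\<bar> * \<bar>y\<bar>)) (\<lambda>w y. cosh (c * y))"
proof -
  have "\<bar>sinh (c * y)\<bar> \<le> 1 * exp (\<bar>c\<bar> * \<bar>y\<bar>)" "\<bar>cosh (c * y)\<bar> \<le> 1 * exp (\<bar>c\<bar> * \<bar>y\<bar>)" for y
    using abs_sinh_le_exp_abs[of "c * y"] cosh_le_exp_abs[of "c * y"] by (simp_all add: abs_mult)
  then have level0:
    "deriv_dominated I 0 (\<lambda>w y. exp (\<bar>c\<bar> * \<bar>y\<bar>)) (\<lambda>w y. sinh (c * y))"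
    "deriv_dominated I 0 (\<lambda>w y. exp (\<bar>c\<bar> * \<bar>y\<bar>)) (\<lambda>w y. cosh (c * y))"
    unfolding deriv_dominated_0
    by (auto intro!: exI[of _ 1] has_real_derivative_imp_differentiable derivative_eq_intros)
  have derivs: "deriv (\<lambda>y. sinh (c * y)) = (\<lambda>y. c * cosh (c * y))"
    "deriv (\<lambda>y. cosh (c * y)) = (\<lambda>y. c * sinh (c * y))"
    by (auto intro!: ext DERIV_imp_deriv derivative_eq_intros)
  show ?thesis
    by (induction n) (use level0 derivs deriv_dominated_scale in \<open>simp_all add: deriv_dominated_Suc\<close>)
qed

lemma a_om_ge_1: "0 \<le> w \<Longrightarrow> 1 \<le> a_om w"
  unfolding a_om_def by simp

lemma a_om_le_3: "w \<le> 1 \<Longrightarrow> a_om w \<le> 3"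
  unfolding a_om_def by (rule real_le_lsqrt) auto

definition sech_profile :: "real \<Rightarrow> real \<Rightarrow> real" where
  "sech_profile a y = 1 / (1 + a * cosh (2 * y))"

lemma sech_profile_denom_pos: "0 \<le> a \<Longrightarrow> 0 < 1 + a * cosh (2 * y)" for a y :: real
  by (simp add: add_pos_nonneg)

lemma deriv_sech_profile:
  assumes "0 \<le> a"
  shows "deriv (sech_profile a) = (\<lambda>y. - 2 * a * sinh (2 * y) * sech_profile a y * sech_profile a y)"
proof (rule ext, rule DERIV_imp_deriv)
  fix y
  have "1 + a * cosh (2 * y) \<noteq> 0"
    using sech_profile_denom_pos[OF assms] by (metis less_irrefl)
  then show "(sech_profile a has_real_derivative - 2 * a * sinh (2 * y) * sech_profile a y * sech_profile a y) (at y)"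
    unfolding sech_profile_def[abs_def]
    by (auto intro!: derivative_eq_intros simp: field_simps power2_eq_square)
qed

lemma abs_sech_profile_le:
  assumes "1 \<le> a"
  shows "\<bar>sech_profile a y\<bar> \<le> 2 * exp (- 2 * \<bar>y\<bar>)"
proof -
  have "cosh (2 * y) \<le> a * cosh (2 * y)"
    using mult_right_mono[OF assms cosh_real_nonneg[of "2 * y"]] by simp
  have "exp (2 * \<bar>y\<bar>) \<le> 2 * cosh (2 * y)"
    using exp_abs_le_two_cosh[of "2 * y"] by (simp add: abs_mult)
  also have "\<dots> \<le> 2 * (1 + a * cosh (2 * y))"
    using \<open>cosh (2 * y) \<le> a * cosh (2 * y)\<close> by (smt (verit))
  finally have "1 / (1 + a * cosh (2 * y)) \<le> 2 / exp (2 * \<bar>y\<bar>)"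
    using sech_profile_denom_pos[of a y] assms by (simp add: field_simps)
  then show ?thesis
    using sech_profile_denom_pos[of a y] assms by (simp add: sech_profile_def exp_minus field_simps)
qed

lemma deriv_dominated_sech_profile:
  assumes a: "\<And>w. w \<in> I \<Longrightarrow> 1 \<le> a w \<and> a w \<le> A"
  shows "deriv_dominated I n (\<lambda>w y. exp (- 2 * \<bar>y\<bar>)) (\<lambda>w. sech_profile (a w))"
proof (induction n)
  have level0: "deriv_dominated I 0 (\<lambda>w y. exp (- 2 * \<bar>y\<bar>)) (\<lambda>w. sech_profile (a w))"
    unfolding deriv_dominated_0
  proof (intro conjI ballI allI exI[of _ 2])
    fix w x assume "w \<in> I"
    then have "1 + a w * cosh (2 * x) \<noteq> 0"
      using a sech_profile_denom_pos[of "a w" x] by force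
    then show "sech_profile (a w) differentiable at x"
      unfolding sech_profile_def[abs_def]
      by (auto intro!: has_real_derivative_imp_differentiable derivative_eq_intros)
  qed (use a abs_sech_profile_le in auto)
  {
    case 0
    show ?case by (rule level0)
  next
    case (Suc n)
    have "deriv_dominated I n (\<lambda>w y. 1 * exp (\<bar>2\<bar> * \<bar>y\<bar>) * exp (- 2 * \<bar>y\<bar>) * exp (- 2 * \<bar>y\<bar>))
        (\<lambda>w y. - 2 * a w * sinh (2 * y) * sech_profile (a w) y * sech_profile (a w) y)"
    proof (intro deriv_dominated_mult Suc.IH)
      show "deriv_dominated I n (\<lambda>w y. 1) (\<lambda>w y. - 2 * a w)"
        by (rule deriv_dominated_const[of _ _ "2 * A"]) (use a in force)+
    qed (use deriv_dominated_sinh_cosh in blast)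
    then have "deriv_dominated I n (\<lambda>w y. exp (- 2 * \<bar>y\<bar>))
        (\<lambda>w y. - 2 * a w * sinh (2 * y) * sech_profile (a w) y * sech_profile (a w) y)"
      by (rule deriv_dominated_weaken) (simp add: mult_exp_exp)
    then have "deriv_dominated I n (\<lambda>w y. exp (- 2 * \<bar>y\<bar>)) (\<lambda>w. deriv (sech_profile (a w)))"
      by (rule deriv_dominated_cong) (use a deriv_sech_profile in force)
    with level0 show ?case by (simp add: deriv_dominated_Suc)
  }
qed

lemma Q_om_pow4:
  assumes "0 \<le> w"
  shows "Q_om w y ^ 4 = 16 * (sech_profile (a_om w) y * sech_profile (a_om w) y)"
proof -
  have "0 \<le> 4 / (1 + a_om w * cosh (2 * y))"
    using sech_profile_denom_pos[of "a_om w" y] a_om_ge_1[OF assms] by simp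
  moreover have "Q_om w y ^ 4 = (sqrt (4 / (1 + a_om w * cosh (2 * y))) ^ 2) ^ 2"
    by (simp add: Q_om_def power_mult[symmetric])
  ultimately have "Q_om w y ^ 4 = (4 / (1 + a_om w * cosh (2 * y))) ^ 2"
    by simp
  then show ?thesis by (simp add: sech_profile_def power2_eq_square)
qed

lemma deriv_dominated_Q_om_pow4:
  assumes "\<And>w. w \<in> I \<Longrightarrow> 0 \<le> w \<and> w \<le> 1"
  shows "deriv_dominated I n (\<lambda>w y. exp (- 4 * \<bar>y\<bar>)) (\<lambda>w y. Q_om w y ^ 4)"
proof -
  have a: "\<And>w. w \<in> I \<Longrightarrow> 1 \<le> a_om w \<and> a_om w \<le> 3"
    using assms a_om_ge_1 a_om_le_3 by blast
  have "deriv_dominated I n (\<lambda>w y. exp (- 2 * \<bar>y\<bar>) * exp (- 2 * \<bar>y\<bar>))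
      (\<lambda>w y. 16 * (sech_profile (a_om w) y * sech_profile (a_om w) y))"
    by (intro deriv_dominated_scale deriv_dominated_mult deriv_dominated_sech_profile[of I a_om 3] a)
  then have "deriv_dominated I n (\<lambda>w y. exp (- 4 * \<bar>y\<bar>))
      (\<lambda>w y. 16 * (sech_profile (a_om w) y * sech_profile (a_om w) y))"
    by (simp add: mult_exp_exp)
  then show ?thesis
    by (rule deriv_dominated_cong) (use assms Q_om_pow4 in force)
qed

definition schrod :: "(real \<Rightarrow> real) \<Rightarrow> (real \<Rightarrow> real) \<Rightarrow> real \<Rightarrow> real" where
  "schrod V f = (\<lambda>y. - deriv (deriv f) y + f y + V y * f y)"

definition V_minus :: "real \<Rightarrow> real \<Rightarrow> real" where
  "V_minus w y = - w * Q_om w y ^ 4"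

definition V_plus :: "real \<Rightarrow> real \<Rightarrow> real" where
  "V_plus w y = w / 3 * Q_om w y ^ 4"

lemma Mminus_eq_schrod: "Mminus w = schrod (V_minus w)"
  by (simp add: fun_eq_iff Mminus_def schrod_def V_minus_def)

lemma Mplus_eq_schrod: "Mplus w = schrod (V_plus w)"
  by (simp add: fun_eq_iff Mplus_def schrod_def V_plus_def)

lemma deriv_dominated_scaled_Q_om_pow4:
  assumes "\<And>w. w \<in> I \<Longrightarrow> 0 \<le> w \<and> w \<le> 1"
  shows "deriv_dominated I n (\<lambda>w y. w * exp (- 4 * \<bar>y\<bar>)) (\<lambda>w y. c * w * Q_om w y ^ 4)"
proof (rule deriv_dominated_mult[OF _ deriv_dominated_Q_om_pow4[OF assms]])
  show "deriv_dominated I n (\<lambda>w y. w) (\<lambda>w y. c * w)"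
    by (rule deriv_dominated_const[of _ _ "\<bar>c\<bar>"]) (use assms in \<open>auto simp: abs_mult\<close>)
qed

lemma deriv_dominated_V_minus:
  "(\<And>w. w \<in> I \<Longrightarrow> 0 \<le> w \<and> w \<le> 1) \<Longrightarrow> deriv_dominated I n (\<lambda>w y. w * exp (- 4 * \<bar>y\<bar>)) V_minus"
  using deriv_dominated_scaled_Q_om_pow4[of I n "- 1"] by (simp add: V_minus_def[abs_def])

lemma deriv_dominated_V_plus:
  "(\<And>w. w \<in> I \<Longrightarrow> 0 \<le> w \<and> w \<le> 1) \<Longrightarrow> deriv_dominated I n (\<lambda>w y. w * exp (- 4 * \<bar>y\<bar>)) V_plus"
  using deriv_dominated_scaled_Q_om_pow4[of I n "1 / 3"] by (simp add: V_plus_def[abs_def])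

section \<open>The conjugation identity\<close>

definition log_deriv :: "(real \<Rightarrow> real) \<Rightarrow> real \<Rightarrow> real" where
  "log_deriv f y = deriv f y / f y"

lemma Uop_eq_log_deriv: "Uop W f = (\<lambda>y. deriv f y - log_deriv W y * f y)"
  by (simp add: Uop_def log_deriv_def)

text \<open>
  Matching the coefficients of \<open>f'''\<close>, \<open>f''\<close> and \<open>f'\<close> in \<open>U M\<^sub>+M\<^sub>- f = K U f + R f\<close> determines
  \<open>K2\<close>, \<open>K1\<close>, \<open>K0\<close>; \<open>conj_remainder\<close> is the coefficient \<open>R\<close> of \<open>f\<close>.
\<close>

definition K2_coef :: "(real \<Rightarrow> real) \<Rightarrow> (real \<Rightarrow> real) \<Rightarrow> (real \<Rightarrow> real) \<Rightarrow> real \<Rightarrow> real" where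
  "K2_coef q N P y = 4 * deriv q y - N y - P y"

definition K1_coef :: "(real \<Rightarrow> real) \<Rightarrow> (real \<Rightarrow> real) \<Rightarrow> (real \<Rightarrow> real) \<Rightarrow> real \<Rightarrow> real" where
  "K1_coef q N P y = 6 * deriv (deriv q) y + 4 * (q y * deriv q y) - 3 * deriv N y - deriv P y"

definition K0_coef :: "(real \<Rightarrow> real) \<Rightarrow> (real \<Rightarrow> real) \<Rightarrow> (real \<Rightarrow> real) \<Rightarrow> real \<Rightarrow> real" where
  "K0_coef q N P y = 4 * deriv (deriv (deriv q)) y + 2 * (K2_coef q N P y * deriv q y)
     + K1_coef q N P y * q y + 2 * (deriv N y * q y) + P y * N y + P y + N y
     - 3 * deriv (deriv N) y - 4 * deriv q y"

definition conj_remainder :: "(real \<Rightarrow> real) \<Rightarrow> (real \<Rightarrow> real) \<Rightarrow> (real \<Rightarrow> real) \<Rightarrow> real \<Rightarrow> real" where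
  "conj_remainder q N P y = deriv P y * (1 + N y) + (1 + P y) * deriv N y - deriv (deriv (deriv N)) y
     - q y * ((1 + P y) * (1 + N y) - deriv (deriv N) y) + deriv (deriv (deriv (deriv q))) y
     + (K2_coef q N P y - 2) * deriv (deriv q) y + K1_coef q N P y * deriv q y
     + (K0_coef q N P y + 1) * q y"

lemma Uop_schrod_schrod:
  fixes W f N P :: "real \<Rightarrow> real"
  defines "q \<equiv> log_deriv W"
  assumes "smooth_fun f" "smooth_fun q" "smooth_fun N" "smooth_fun P"
  shows "Uop W (schrod P (schrod N f)) y
    = Kop (K2_coef q N P) (K1_coef q N P) (K0_coef q N P) (Uop W f) y + conj_remainder q N P y * f y"
  using assms(2-) unfolding Uop_eq_log_deriv schrod_def Kop_def q_def[symmetric]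
  by simp (simp add: K2_coef_def K1_coef_def K0_coef_def conj_remainder_def algebra_simps)

lemma schrod_cmult: "smooth_fun f \<Longrightarrow> schrod V (\<lambda>y. c * f y) = (\<lambda>y. c * schrod V f y)"
  by (simp add: schrod_def fun_eq_iff algebra_simps)

lemma Uop_cmult: "smooth_fun f \<Longrightarrow> Uop W (\<lambda>y. c * f y) = (\<lambda>y. c * Uop W f y)"
  by (simp add: Uop_def fun_eq_iff algebra_simps)

lemma Uop_self: "(\<And>y. f y \<noteq> 0) \<Longrightarrow> Uop f f = (\<lambda>y. 0)"
  by (simp add: Uop_def fun_eq_iff)

lemma Kop_zero: "Kop K2 K1 K0 (\<lambda>y. 0) = (\<lambda>y. 0)"
  by (simp add: Kop_def fun_eq_iff)

section \<open>Internal modes\<close>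

definition gap_weight :: "(real \<Rightarrow> real) \<Rightarrow> real \<Rightarrow> real \<Rightarrow> real" where
  "gap_weight \<alpha> w y = w * exp (- (sqrt (2 - (\<alpha> w)\<^sup>2) - \<alpha> w) * \<bar>y\<bar>)"

locale internal_mode =
  fixes I :: "real set" and \<alpha> :: "real \<Rightarrow> real" and W1 W2 :: "real \<Rightarrow> real \<Rightarrow> real"
  assumes freq_range: "\<And>w. w \<in> I \<Longrightarrow> 0 < w \<and> w \<le> 1"
    and alpha_range: "\<And>w. w \<in> I \<Longrightarrow> 0 < \<alpha> w \<and> \<alpha> w \<le> 1"
    and W1_dominated: "\<And>n. deriv_dominated I n (\<lambda>w y. exp (- \<alpha> w * \<bar>y\<bar>)) W1"
    and W2_dominated: "\<And>n. deriv_dominated I n (\<lambda>w y. exp (- \<alpha> w * \<bar>y\<bar>)) W2"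
    and W_diff_dominated: "\<And>n. deriv_dominated I n
          (\<lambda>w y. w * exp (- sqrt (2 - (\<alpha> w)\<^sup>2) * \<bar>y\<bar>)) (\<lambda>w y. W1 w y - W2 w y)"
    and W2_lower: "\<And>w y. w \<in> I \<Longrightarrow> exp (- \<alpha> w * \<bar>y\<bar>) / 2 \<le> W2 w y"
    and Mplus_W1: "\<And>w. w \<in> I \<Longrightarrow> Mplus w (W1 w) = (\<lambda>y. (1 - (\<alpha> w)\<^sup>2) * W2 w y)"
    and Mminus_W2: "\<And>w. w \<in> I \<Longrightarrow> Mminus w (W2 w) = (\<lambda>y. (1 - (\<alpha> w)\<^sup>2) * W1 w y)"
begin

abbreviation kappa :: "real \<Rightarrow> real" where
  "kappa w \<equiv> sqrt (2 - (\<alpha> w)\<^sup>2)"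

abbreviation eigval :: "real \<Rightarrow> real" where
  "eigval w \<equiv> 1 - (\<alpha> w)\<^sup>2"

lemma freq_bounds: "w \<in> I \<Longrightarrow> 0 \<le> w \<and> w \<le> 1"
  using freq_range by force

lemma alpha_sq_le_1: "w \<in> I \<Longrightarrow> (\<alpha> w)\<^sup>2 \<le> 1"
  using alpha_range[of w] by (intro power_le_one) auto

lemma kappa_range: "w \<in> I \<Longrightarrow> 1 \<le> kappa w \<and> kappa w \<le> 2"
proof -
  assume "w \<in> I"
  then have "1 \<le> 2 - (\<alpha> w)\<^sup>2" "2 - (\<alpha> w)\<^sup>2 \<le> 4"
    using alpha_sq_le_1[of w] zero_le_power2[of "\<alpha> w"] by linarith+
  then show ?thesis
    by (metis real_sqrt_le_mono real_sqrt_one real_sqrt_four)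
qed

lemma alpha_le_kappa: "w \<in> I \<Longrightarrow> \<alpha> w \<le> kappa w"
  using alpha_range[of w] kappa_range[of w] by linarith

lemma eigval_range: "w \<in> I \<Longrightarrow> 0 \<le> eigval w \<and> eigval w \<le> 1"
  using alpha_sq_le_1[of w] by simp

lemma W2_pos: "w \<in> I \<Longrightarrow> 0 < W2 w y"
  using W2_lower[of w y] exp_gt_zero[of "- \<alpha> w * \<bar>y\<bar>"] by linarith

lemma smooth_W1: "w \<in> I \<Longrightarrow> smooth_fun (W1 w)"
  using deriv_dominated_smooth[OF W1_dominated] .

lemma smooth_W2: "w \<in> I \<Longrightarrow> smooth_fun (W2 w)"
  using deriv_dominated_smooth[OF W2_dominated] .

lemma W2_second_deriv:
  "w \<in> I \<Longrightarrow> deriv (deriv (W2 w)) y = W2 w y + V_minus w y * W2 w y - eigval w * W1 w y"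
  using fun_cong[OF Mminus_W2, of w y] by (simp add: Mminus_eq_schrod schrod_def algebra_simps)

lemma gap_weight_range: "w \<in> I \<Longrightarrow> 0 \<le> gap_weight \<alpha> w y \<and> gap_weight \<alpha> w y \<le> 1"
proof -
  assume w: "w \<in> I"
  then have "- (kappa w - \<alpha> w) * \<bar>y\<bar> \<le> 0"
    using alpha_le_kappa[OF w] by (intro mult_nonpos_nonneg) auto
  then show ?thesis
    using freq_range[OF w] by (simp add: gap_weight_def mult_le_one)
qed

lemma gap_weight_ge: "w \<in> I \<Longrightarrow> w * exp (- 4 * \<bar>y\<bar>) \<le> gap_weight \<alpha> w y"
proof -
  assume w: "w \<in> I"
  then have "- 4 * \<bar>y\<bar> \<le> - (kappa w - \<alpha> w) * \<bar>y\<bar>"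
    using kappa_range alpha_range by (intro mult_right_mono) force+
  then show ?thesis
    using freq_range[OF w] by (simp add: gap_weight_def)
qed

lemma abs_inverse_W2_le: "w \<in> I \<Longrightarrow> \<bar>1 / W2 w y\<bar> \<le> 2 * exp (\<alpha> w * \<bar>y\<bar>)"
proof -
  assume w: "w \<in> I"
  have "1 / W2 w y \<le> 1 / (exp (- \<alpha> w * \<bar>y\<bar>) / 2)"
    using W2_lower[OF w] W2_pos[OF w] by (intro divide_left_mono) auto
  also have "\<dots> = 2 * exp (\<alpha> w * \<bar>y\<bar>)"
    by (simp add: exp_minus field_simps)
  finally show ?thesis
    using W2_pos[OF w, of y] by simp
qed

lemma deriv_dominated_inverse_W2: "deriv_dominated I n (\<lambda>w y. exp (\<alpha> w * \<bar>y\<bar>)) (\<lambda>w y. 1 / W2 w y)"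
proof (induction n)
  have level0: "deriv_dominated I 0 (\<lambda>w y. exp (\<alpha> w * \<bar>y\<bar>)) (\<lambda>w y. 1 / W2 w y)"
    unfolding deriv_dominated_0
  proof (intro conjI ballI allI exI[of _ 2])
    fix w x assume w: "w \<in> I"
    show "(\<lambda>y. 1 / W2 w y) differentiable at x"
      using smooth_fun_has_deriv[OF smooth_W2[OF w]] W2_pos[OF w, of x]
      by (auto intro!: has_real_derivative_imp_differentiable derivative_eq_intros)
  qed (use abs_inverse_W2_le in auto)
  {
    case 0
    show ?case by (rule level0)
  next
    case (Suc n)
    have "deriv_dominated I n (\<lambda>w y. exp (- \<alpha> w * \<bar>y\<bar>) * exp (\<alpha> w * \<bar>y\<bar>) * exp (\<alpha> w * \<bar>y\<bar>))
        (\<lambda>w y. - 1 * deriv (W2 w) y * (1 / W2 w y) * (1 / W2 w y))"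
      by (intro deriv_dominated_mult deriv_dominated_scale deriv_dominated_deriv W2_dominated Suc.IH)
    then have "deriv_dominated I n (\<lambda>w y. exp (\<alpha> w * \<bar>y\<bar>))
        (\<lambda>w y. - 1 * deriv (W2 w) y * (1 / W2 w y) * (1 / W2 w y))"
      by (simp add: mult_exp_exp)
    moreover have "deriv (\<lambda>y. 1 / W2 w y) = (\<lambda>y. - 1 * deriv (W2 w) y * (1 / W2 w y) * (1 / W2 w y))"
      if "w \<in> I" for w
    proof (rule ext, rule DERIV_imp_deriv)
      fix y
      show "((\<lambda>y. 1 / W2 w y) has_real_derivative - 1 * deriv (W2 w) y * (1 / W2 w y) * (1 / W2 w y)) (at y)"
        using smooth_fun_has_deriv[OF smooth_W2[OF that]] W2_pos[OF that, of y]
        by (auto intro!: derivative_eq_intros simp: field_simps power2_eq_square)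
    qed
    ultimately have "deriv_dominated I n (\<lambda>w y. exp (\<alpha> w * \<bar>y\<bar>)) (\<lambda>w. deriv (\<lambda>y. 1 / W2 w y))"
      by (rule deriv_dominated_cong[OF _ sym])
    with level0 show ?case by (simp add: deriv_dominated_Suc)
  }
qed

lemma deriv_dominated_log_deriv_W2: "deriv_dominated I n (\<lambda>w y. 1) (\<lambda>w. log_deriv (W2 w))"
proof -
  have "deriv_dominated I n (\<lambda>w y. exp (- \<alpha> w * \<bar>y\<bar>) * exp (\<alpha> w * \<bar>y\<bar>))
      (\<lambda>w y. deriv (W2 w) y * (1 / W2 w y))"
    by (intro deriv_dominated_mult deriv_dominated_deriv W2_dominated deriv_dominated_inverse_W2)
  then show ?thesis
    by (simp add: mult_exp_exp log_deriv_def[abs_def])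
qed

definition W_defect :: "real \<Rightarrow> real \<Rightarrow> real" where
  "W_defect w y = (W1 w y - W2 w y) / W2 w y"

lemma deriv_dominated_W_defect: "deriv_dominated I n (gap_weight \<alpha>) W_defect"
proof -
  have "deriv_dominated I n (\<lambda>w y. w * exp (- kappa w * \<bar>y\<bar>) * exp (\<alpha> w * \<bar>y\<bar>))
      (\<lambda>w y. (W1 w y - W2 w y) * (1 / W2 w y))"
    by (intro deriv_dominated_mult W_diff_dominated deriv_dominated_inverse_W2)
  then have "deriv_dominated I n (gap_weight \<alpha>) (\<lambda>w y. (W1 w y - W2 w y) * (1 / W2 w y))"
    by (rule deriv_dominated_weaken) (simp add: mult_exp_exp gap_weight_def algebra_simps)
  then show ?thesis
    by (rule deriv_dominated_cong) (simp add: W_defect_def fun_eq_iff)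
qed

lemma deriv_dominated_V_minus_gap: "deriv_dominated I n (gap_weight \<alpha>) V_minus"
  by (rule deriv_dominated_weaken[OF deriv_dominated_V_minus[OF freq_bounds] gap_weight_ge])

lemma deriv_dominated_V_plus_gap: "deriv_dominated I n (gap_weight \<alpha>) V_plus"
  by (rule deriv_dominated_weaken[OF deriv_dominated_V_plus[OF freq_bounds] gap_weight_ge])

lemma deriv_log_deriv_W2:
  assumes w: "w \<in> I"
  shows "deriv (log_deriv (W2 w)) = (\<lambda>y. (\<alpha> w)\<^sup>2 - log_deriv (W2 w) y * log_deriv (W2 w) y
           + V_minus w y - eigval w * W_defect w y)"
proof (rule ext, rule DERIV_imp_deriv)
  fix y
  have W2_nz: "W2 w y \<noteq> 0" using W2_pos[OF w, of y] by simp
  have "(log_deriv (W2 w) has_real_derivative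
      (deriv (deriv (W2 w)) y * W2 w y - deriv (W2 w) y * deriv (W2 w) y) / (W2 w y * W2 w y)) (at y)"
    unfolding log_deriv_def[abs_def]
    using smooth_fun_has_deriv[OF smooth_fun_deriv[OF smooth_W2[OF w]]] smooth_fun_has_deriv[OF smooth_W2[OF w]] W2_nz
    by (rule DERIV_divide)
  moreover have "(deriv (deriv (W2 w)) y * W2 w y - deriv (W2 w) y * deriv (W2 w) y) / (W2 w y * W2 w y)
      = (\<alpha> w)\<^sup>2 - log_deriv (W2 w) y * log_deriv (W2 w) y + V_minus w y - eigval w * W_defect w y"
    unfolding W2_second_deriv[OF w] log_deriv_def W_defect_def using W2_nz by (simp add: field_simps power2_eq_square)
  ultimately show "(log_deriv (W2 w) has_real_derivative (\<alpha> w)\<^sup>2 - log_deriv (W2 w) y * log_deriv (W2 w) y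
      + V_minus w y - eigval w * W_defect w y) (at y)"
    by simp
qed

definition mode_energy :: "real \<Rightarrow> real \<Rightarrow> real" where
  "mode_energy w y = (deriv (W2 w) y)\<^sup>2 - (\<alpha> w)\<^sup>2 * (W2 w y)\<^sup>2"

lemma mode_energy_has_deriv:
  assumes w: "w \<in> I"
  shows "(mode_energy w has_real_derivative
           2 * deriv (W2 w) y * (V_minus w y * W2 w y - eigval w * (W1 w y - W2 w y))) (at y)"
proof -
  have "(mode_energy w has_real_derivative
      2 * deriv (W2 w) y * deriv (deriv (W2 w)) y - (\<alpha> w)\<^sup>2 * (2 * W2 w y * deriv (W2 w) y)) (at y)"
    unfolding mode_energy_def[abs_def]
    using smooth_fun_has_deriv[OF smooth_fun_deriv[OF smooth_W2[OF w]]] smooth_fun_has_deriv[OF smooth_W2[OF w]]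
    by (auto intro!: derivative_eq_intros)
  then show ?thesis
    by (simp add: W2_second_deriv[OF w] algebra_simps)
qed

lemma deriv_dominated_mode_energy_deriv:
  "deriv_dominated I 0 (\<lambda>w y. w * exp (- (\<alpha> w + kappa w) * \<bar>y\<bar>))
     (\<lambda>w y. 2 * deriv (W2 w) y * (V_minus w y * W2 w y - eigval w * (W1 w y - W2 w y)))"
proof -
  have "deriv_dominated I 0 (\<lambda>w y. w * exp (- 4 * \<bar>y\<bar>) * exp (- \<alpha> w * \<bar>y\<bar>)) (\<lambda>w y. V_minus w y * W2 w y)"
    by (intro deriv_dominated_mult deriv_dominated_V_minus W2_dominated freq_bounds)
  then have "deriv_dominated I 0 (\<lambda>w y. w * exp (- kappa w * \<bar>y\<bar>)) (\<lambda>w y. V_minus w y * W2 w y)"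
  proof (rule deriv_dominated_weaken)
    fix w y assume w: "w \<in> I"
    have "(- 4 - \<alpha> w) * \<bar>y\<bar> \<le> - kappa w * \<bar>y\<bar>"
      using kappa_range[OF w] alpha_range[OF w] by (intro mult_right_mono) auto
    then have "exp (- 4 * \<bar>y\<bar>) * exp (- \<alpha> w * \<bar>y\<bar>) \<le> exp (- kappa w * \<bar>y\<bar>)"
      by (simp add: mult_exp_exp algebra_simps)
    then show "w * exp (- 4 * \<bar>y\<bar>) * exp (- \<alpha> w * \<bar>y\<bar>) \<le> w * exp (- kappa w * \<bar>y\<bar>)"
      using freq_range[OF w] by (simp add: mult.assoc)
  qed
  moreover have "deriv_dominated I 0 (\<lambda>w y. w * exp (- kappa w * \<bar>y\<bar>))
      (\<lambda>w y. eigval w * (W1 w y - W2 w y))"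
  proof -
    have "deriv_dominated I 0 (\<lambda>w y. 1) (\<lambda>w y. eigval w)"
      by (rule deriv_dominated_const[of _ _ 1]) (use eigval_range in auto)
    from deriv_dominated_mult[OF this W_diff_dominated] show ?thesis by simp
  qed
  ultimately have "deriv_dominated I 0 (\<lambda>w y. exp (- \<alpha> w * \<bar>y\<bar>) * (w * exp (- kappa w * \<bar>y\<bar>)))
      (\<lambda>w y. deriv (W2 w) y * (V_minus w y * W2 w y - eigval w * (W1 w y - W2 w y)))"
    by (rule deriv_dominated_mult[OF deriv_dominated_deriv[OF W2_dominated] deriv_dominated_diff])
  then have "deriv_dominated I 0 (\<lambda>w y. w * exp (- (\<alpha> w + kappa w) * \<bar>y\<bar>))
      (\<lambda>w y. 2 * (deriv (W2 w) y * (V_minus w y * W2 w y - eigval w * (W1 w y - W2 w y))))"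
    by (intro deriv_dominated_scale) (simp add: mult_exp_exp algebra_simps)
  then show ?thesis
    by (simp add: mult.assoc)
qed

lemma deriv_dominated_mode_energy_rough:
  "deriv_dominated I 0 (\<lambda>w y. exp (- (2 * \<alpha> w) * \<bar>y\<bar>)) mode_energy"
proof -
  have "deriv_dominated I 0 (\<lambda>w y. exp (- \<alpha> w * \<bar>y\<bar>) * exp (- \<alpha> w * \<bar>y\<bar>))
      (\<lambda>w y. deriv (W2 w) y * deriv (W2 w) y)"
    by (intro deriv_dominated_mult deriv_dominated_deriv W2_dominated)
  moreover have "deriv_dominated I 0 (\<lambda>w y. exp (- \<alpha> w * \<bar>y\<bar>) * exp (- \<alpha> w * \<bar>y\<bar>))
      (\<lambda>w y. (\<alpha> w)\<^sup>2 * (W2 w y * W2 w y))"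
    using alpha_sq_le_1 by (intro deriv_dominated_cmult[of _ _ 1] deriv_dominated_mult W2_dominated) auto
  ultimately have "deriv_dominated I 0 (\<lambda>w y. exp (- \<alpha> w * \<bar>y\<bar>) * exp (- \<alpha> w * \<bar>y\<bar>))
      (\<lambda>w y. deriv (W2 w) y * deriv (W2 w) y - (\<alpha> w)\<^sup>2 * (W2 w y * W2 w y))"
    by (rule deriv_dominated_diff)
  then have "deriv_dominated I 0 (\<lambda>w y. exp (- (2 * \<alpha> w) * \<bar>y\<bar>))
      (\<lambda>w y. deriv (W2 w) y * deriv (W2 w) y - (\<alpha> w)\<^sup>2 * (W2 w y * W2 w y))"
    by (rule deriv_dominated_weaken) (simp add: mult_exp_exp)
  then show ?thesis
    by (rule deriv_dominated_cong) (simp add: mode_energy_def fun_eq_iff power2_eq_square)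
qed

lemma deriv_dominated_mode_energy:
  "deriv_dominated I 0 (\<lambda>w y. w * exp (- (\<alpha> w + kappa w) * \<bar>y\<bar>)) mode_energy"
proof -
  obtain M where "M \<ge> 0" and M: "\<And>w y. w \<in> I \<Longrightarrow>
      \<bar>2 * deriv (W2 w) y * (V_minus w y * W2 w y - eigval w * (W1 w y - W2 w y))\<bar>
        \<le> M * (w * exp (- (\<alpha> w + kappa w) * \<bar>y\<bar>))"
    using deriv_dominated_bound[OF deriv_dominated_mode_energy_deriv] by auto
  obtain K where K: "\<And>w y. w \<in> I \<Longrightarrow> \<bar>mode_energy w y\<bar> \<le> K * exp (- (2 * \<alpha> w) * \<bar>y\<bar>)"
    using deriv_dominated_bound[OF deriv_dominated_mode_energy_rough] by auto
  have "\<bar>mode_energy w y\<bar> \<le> (M * w) * exp (- (\<alpha> w + kappa w) * \<bar>y\<bar>)" if w: "w \<in> I" for w y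
  proof (rule abs_le_exp_decay_of_decaying[OF mode_energy_has_deriv[OF w] K[OF w]])
    show "0 < 2 * \<alpha> w" "1 \<le> \<alpha> w + kappa w"
      using alpha_range[OF w] kappa_range[OF w] by linarith+
    show "0 \<le> M * w"
      using \<open>M \<ge> 0\<close> freq_range[OF w] by simp
    show "\<bar>2 * deriv (W2 w) y * (V_minus w y * W2 w y - eigval w * (W1 w y - W2 w y))\<bar>
        \<le> M * w * exp (- (\<alpha> w + kappa w) * \<bar>y\<bar>)" for y
      using M[OF w, of y] by (simp add: mult.assoc)
  qed
  then show ?thesis
    unfolding deriv_dominated_0 mult.assoc
    using \<open>M \<ge> 0\<close> has_real_derivative_imp_differentiable[OF mode_energy_has_deriv] by blast
qed

lemma deriv_dominated_log_deriv_sq: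
  "deriv_dominated I 0 (gap_weight \<alpha>) (\<lambda>w y. log_deriv (W2 w) y * log_deriv (W2 w) y - (\<alpha> w)\<^sup>2)"
proof -
  have "deriv_dominated I 0 (\<lambda>w y. w * exp (- (\<alpha> w + kappa w) * \<bar>y\<bar>) * exp (\<alpha> w * \<bar>y\<bar>) * exp (\<alpha> w * \<bar>y\<bar>))
      (\<lambda>w y. mode_energy w y * (1 / W2 w y) * (1 / W2 w y))"
    by (intro deriv_dominated_mult deriv_dominated_mode_energy deriv_dominated_inverse_W2)
  then have "deriv_dominated I 0 (gap_weight \<alpha>) (\<lambda>w y. mode_energy w y * (1 / W2 w y) * (1 / W2 w y))"
    by (rule deriv_dominated_weaken) (simp add: gap_weight_def mult_exp_exp algebra_simps)
  then show ?thesis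
  proof (rule deriv_dominated_cong)
    fix w assume w: "w \<in> I"
    show "(\<lambda>y. mode_energy w y * (1 / W2 w y) * (1 / W2 w y))
        = (\<lambda>y. log_deriv (W2 w) y * log_deriv (W2 w) y - (\<alpha> w)\<^sup>2)"
    proof
      fix y
      have "W2 w y \<noteq> 0" using W2_pos[OF w, of y] by simp
      then show "mode_energy w y * (1 / W2 w y) * (1 / W2 w y) = log_deriv (W2 w) y * log_deriv (W2 w) y - (\<alpha> w)\<^sup>2"
        by (simp add: mode_energy_def log_deriv_def field_simps power2_eq_square)
    qed
  qed
qed

lemma deriv_dominated_eigval_W_defect:
  "deriv_dominated I n (gap_weight \<alpha>) (\<lambda>w y. eigval w * W_defect w y)"
  using eigval_range by (intro deriv_dominated_cmult[of _ _ 1] deriv_dominated_W_defect) auto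

lemma smooth_log_deriv_W2: "w \<in> I \<Longrightarrow> smooth_fun (log_deriv (W2 w))"
  using deriv_dominated_smooth[OF deriv_dominated_log_deriv_W2] .

lemma smooth_V_minus: "w \<in> I \<Longrightarrow> smooth_fun (V_minus w)"
  using deriv_dominated_smooth[OF deriv_dominated_V_minus_gap] .

lemma smooth_V_plus: "w \<in> I \<Longrightarrow> smooth_fun (V_plus w)"
  using deriv_dominated_smooth[OF deriv_dominated_V_plus_gap] .

lemma smooth_W_defect: "w \<in> I \<Longrightarrow> smooth_fun (W_defect w)"
  using deriv_dominated_smooth[OF deriv_dominated_W_defect] .

lemma deriv_dominated_deriv_log_deriv:
  "deriv_dominated I n (gap_weight \<alpha>) (\<lambda>w. deriv (log_deriv (W2 w)))"
proof (induction n)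
  have level0: "deriv_dominated I 0 (gap_weight \<alpha>) (\<lambda>w. deriv (log_deriv (W2 w)))"
  proof -
    have "deriv_dominated I 0 (gap_weight \<alpha>) (\<lambda>w y. V_minus w y - eigval w * W_defect w y
        - (log_deriv (W2 w) y * log_deriv (W2 w) y - (\<alpha> w)\<^sup>2))"
      by (intro deriv_dominated_diff deriv_dominated_V_minus_gap deriv_dominated_eigval_W_defect
          deriv_dominated_log_deriv_sq)
    then show ?thesis
      by (rule deriv_dominated_cong) (simp add: deriv_log_deriv_W2 fun_eq_iff)
  qed
  {
    case 0
    show ?case by (rule level0)
  next
    case (Suc n)
    have "deriv_dominated I n (gap_weight \<alpha>) (\<lambda>w y. eigval w * deriv (W_defect w) y)"
      using eigval_range
      by (intro deriv_dominated_cmult[of _ _ 1] deriv_dominated_deriv[OF deriv_dominated_W_defect]) auto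
    then have "deriv_dominated I n (gap_weight \<alpha>) (\<lambda>w y. deriv (V_minus w) y
        - eigval w * deriv (W_defect w) y - 2 * (deriv (log_deriv (W2 w)) y * log_deriv (W2 w) y))"
      by (intro deriv_dominated_diff deriv_dominated_deriv[OF deriv_dominated_V_minus_gap] deriv_dominated_scale
          deriv_dominated_mult_bounded[OF Suc.IH deriv_dominated_log_deriv_W2])
    then have "deriv_dominated I n (gap_weight \<alpha>) (\<lambda>w. deriv (deriv (log_deriv (W2 w))))"
    proof (rule deriv_dominated_cong)
      fix w assume w: "w \<in> I"
      note smooth = smooth_log_deriv_W2[OF w] smooth_V_minus[OF w] smooth_W_defect[OF w]
      have "deriv (deriv (log_deriv (W2 w))) = deriv (\<lambda>y. (\<alpha> w)\<^sup>2
          - log_deriv (W2 w) y * log_deriv (W2 w) y + V_minus w y - eigval w * W_defect w y)"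
        by (simp only: deriv_log_deriv_W2[OF w])
      also have "\<dots> = (\<lambda>y. deriv (V_minus w) y - eigval w * deriv (W_defect w) y
          - 2 * (deriv (log_deriv (W2 w)) y * log_deriv (W2 w) y))"
        using smooth by (simp add: fun_eq_iff)
      finally show "(\<lambda>y. deriv (V_minus w) y - eigval w * deriv (W_defect w) y
          - 2 * (deriv (log_deriv (W2 w)) y * log_deriv (W2 w) y)) = deriv (deriv (log_deriv (W2 w)))" by (rule sym)
    qed
    with level0 show ?case by (simp add: deriv_dominated_Suc)
  }
qed

abbreviation K2 :: "real \<Rightarrow> real \<Rightarrow> real" where
  "K2 \<equiv> \<lambda>w. K2_coef (log_deriv (W2 w)) (V_minus w) (V_plus w)"

abbreviation K1 :: "real \<Rightarrow> real \<Rightarrow> real" where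
  "K1 \<equiv> \<lambda>w. K1_coef (log_deriv (W2 w)) (V_minus w) (V_plus w)"

abbreviation K0 :: "real \<Rightarrow> real \<Rightarrow> real" where
  "K0 \<equiv> \<lambda>w. K0_coef (log_deriv (W2 w)) (V_minus w) (V_plus w)"

lemma deriv_dominated_K2: "deriv_dominated I n (gap_weight \<alpha>) K2"
  unfolding K2_coef_def
  by (intro deriv_dominated_diff deriv_dominated_scale deriv_dominated_deriv_log_deriv
      deriv_dominated_V_minus_gap deriv_dominated_V_plus_gap)

lemma deriv_dominated_K1: "deriv_dominated I n (gap_weight \<alpha>) K1"
  unfolding K1_coef_def
  by (intro deriv_dominated_diff deriv_dominated_add deriv_dominated_scale
      deriv_dominated_deriv[OF deriv_dominated_deriv_log_deriv]
      deriv_dominated_bounded_mult[OF deriv_dominated_log_deriv_W2 deriv_dominated_deriv_log_deriv]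
      deriv_dominated_deriv[OF deriv_dominated_V_minus_gap] deriv_dominated_deriv[OF deriv_dominated_V_plus_gap])

lemma deriv_dominated_K0: "deriv_dominated I n (gap_weight \<alpha>) K0"
  unfolding K0_coef_def
  by (intro deriv_dominated_diff deriv_dominated_add deriv_dominated_scale
      deriv_dominated_deriv[OF deriv_dominated_deriv[OF deriv_dominated_deriv_log_deriv]]
      deriv_dominated_mult_small[OF gap_weight_range deriv_dominated_K2 deriv_dominated_deriv_log_deriv]
      deriv_dominated_mult_bounded[OF deriv_dominated_K1 deriv_dominated_log_deriv_W2]
      deriv_dominated_mult_bounded[OF deriv_dominated_deriv[OF deriv_dominated_V_minus_gap] deriv_dominated_log_deriv_W2]
      deriv_dominated_mult_small[OF gap_weight_range deriv_dominated_V_plus_gap deriv_dominated_V_minus_gap]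
      deriv_dominated_V_plus_gap deriv_dominated_V_minus_gap
      deriv_dominated_deriv[OF deriv_dominated_deriv[OF deriv_dominated_V_minus_gap]]
      deriv_dominated_deriv_log_deriv)

lemma conj_remainder_eq_0:
  assumes w: "w \<in> I"
  shows "conj_remainder (log_deriv (W2 w)) (V_minus w) (V_plus w) y = 0"
proof -
  have W2_nz: "W2 w y \<noteq> 0" for y
    using W2_pos[OF w, of y] by simp
  have "schrod (V_plus w) (schrod (V_minus w) (W2 w)) = (\<lambda>y. eigval w * (eigval w * W2 w y))"
    using Mminus_W2[OF w] Mplus_W1[OF w] smooth_W1[OF w]
    by (simp add: Mminus_eq_schrod Mplus_eq_schrod schrod_cmult)
  then have "Uop (W2 w) (schrod (V_plus w) (schrod (V_minus w) (W2 w))) y = 0"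
    using smooth_W2[OF w] W2_nz by (simp add: Uop_cmult Uop_self)
  moreover have "Kop (K2 w) (K1 w) (K0 w) (Uop (W2 w) (W2 w)) y = 0"
    using W2_nz by (simp add: Uop_self Kop_zero)
  ultimately show ?thesis
    using Uop_schrod_schrod[OF smooth_W2[OF w] smooth_log_deriv_W2[OF w] smooth_V_minus[OF w] smooth_V_plus[OF w], of y]
      W2_nz[of y] by simp
qed

lemma Uop_Mplus_Mminus_eq_Kop:
  "w \<in> I \<Longrightarrow> smooth_fun f \<Longrightarrow> Uop (W2 w) (Mplus w (Mminus w f)) = Kop (K2 w) (K1 w) (K0 w) (Uop (W2 w) f)"
  by (simp add: fun_eq_iff Mplus_eq_schrod Mminus_eq_schrod Uop_schrod_schrod conj_remainder_eq_0
      smooth_log_deriv_W2 smooth_V_minus smooth_V_plus)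

lemma K_coefs_bound:
  "\<exists>C. \<forall>w\<in>I. \<forall>y. \<bar>Dk k (K2 w) y\<bar> + \<bar>Dk k (K1 w) y\<bar> + \<bar>Dk k (K0 w) y\<bar> \<le> C * gap_weight \<alpha> w y"
proof -
  obtain C2 C1 C0 where
      "\<forall>w\<in>I. \<forall>y. \<bar>Dk k (K2 w) y\<bar> \<le> C2 * gap_weight \<alpha> w y"
      "\<forall>w\<in>I. \<forall>y. \<bar>Dk k (K1 w) y\<bar> \<le> C1 * gap_weight \<alpha> w y"
      "\<forall>w\<in>I. \<forall>y. \<bar>Dk k (K0 w) y\<bar> \<le> C0 * gap_weight \<alpha> w y"
    using deriv_dominated_bound[OF deriv_dominated_K2] deriv_dominated_bound[OF deriv_dominated_K1]
      deriv_dominated_bound[OF deriv_dominated_K0] by meson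
  then show ?thesis
    by (intro exI[of _ "C2 + C1 + C0"]) (fastforce simp: distrib_right intro: add_mono)
qed

theorem conjugation_identity_and_bounds:
  "\<exists>K2 K1 K0 :: real \<Rightarrow> real \<Rightarrow> real.
     (\<forall>w\<in>I. smooth_fun (K2 w) \<and> smooth_fun (K1 w) \<and> smooth_fun (K0 w) \<and>
        (\<forall>f. smooth_fun f \<longrightarrow> Uop (W2 w) (Mplus w (Mminus w f)) = Kop (K2 w) (K1 w) (K0 w) (Uop (W2 w) f))) \<and>
     (\<forall>k. \<exists>C. \<forall>w\<in>I. \<forall>y. \<bar>Dk k (K2 w) y\<bar> + \<bar>Dk k (K1 w) y\<bar> + \<bar>Dk k (K0 w) y\<bar>
        \<le> C * w * exp (- (sqrt (2 - (\<alpha> w)\<^sup>2) - \<alpha> w) * \<bar>y\<bar>))"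
  using deriv_dominated_smooth[OF deriv_dominated_K2] deriv_dominated_smooth[OF deriv_dominated_K1]
    deriv_dominated_smooth[OF deriv_dominated_K0] Uop_Mplus_Mminus_eq_Kop K_coefs_bound
  by (intro exI[of _ K2] exI[of _ K1] exI[of _ K0]) (simp add: gap_weight_def mult.assoc)

end

section \<open>Small frequencies\<close>

lemma pd_y_funpow: "(pd_y ^^ k) F = (\<lambda>w. (deriv ^^ k) (F w))"
  by (induction k) (auto simp: pd_y_def)

lemma iter_pd_replicate_False: "iter_pd (replicate k False) F w = Dk k (F w)"
  unfolding iter_pd_def Dk_def by (simp add: fold_replicate pd_y_funpow)

lemma smooth2_on_imp_smooth_fun:
  assumes "smooth2_on (J \<times> UNIV) F" "w \<in> J"
  shows "smooth_fun (F w)"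
  unfolding smooth_fun_def
proof (intro allI)
  fix k and x :: real
  have "(w, x) \<in> J \<times> UNIV" using assms(2) by simp
  then have "iter_pd (replicate k False) F w differentiable at x"
    using assms(1) unfolding smooth2_on_def by (metis fst_conv snd_conv)
  then show "Dk k (F w) differentiable at x"
    by (simp add: iter_pd_replicate_False)
qed

lemma mode_weight_le:
  fixes w a y :: real
  assumes "0 < w" "w \<le> 1" "0 < a" "a \<le> 1"
  shows "w ^ k * exp (- a * \<bar>y\<bar>) + w * exp (- \<bar>y\<bar>) \<le> 2 * exp (- a * \<bar>y\<bar>)"
proof -
  have "w ^ k \<le> 1"
    using assms by (intro power_le_one) auto
  then have "w ^ k * exp (- a * \<bar>y\<bar>) \<le> exp (- a * \<bar>y\<bar>)"
    using assms by (intro mult_left_le_one_le) auto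
  moreover have "w * exp (- \<bar>y\<bar>) \<le> exp (- a * \<bar>y\<bar>)"
  proof -
    have "a * \<bar>y\<bar> \<le> \<bar>y\<bar>"
      using mult_left_le_one_le[of "\<bar>y\<bar>" a] assms by simp
    then have "exp (- \<bar>y\<bar>) \<le> exp (- a * \<bar>y\<bar>)"
      by simp
    moreover have "w * exp (- \<bar>y\<bar>) \<le> exp (- \<bar>y\<bar>)"
      using assms by (intro mult_left_le_one_le) auto
    ultimately show ?thesis by linarith
  qed
  ultimately show ?thesis by linarith
qed

lemma deriv_dominated_of_mode_bounds:
  assumes smooth: "\<And>w. w \<in> I \<Longrightarrow> smooth_fun (W w)"
    and range: "\<And>w. w \<in> I \<Longrightarrow> 0 < w \<and> w \<le> 1 \<and> 0 < \<alpha> w \<and> \<alpha> w \<le> 1"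
    and bounds: "\<And>k. \<exists>C. \<forall>w\<in>I. \<forall>y. \<bar>Dk k (W w) y\<bar> \<le> C * (w ^ k * exp (- \<alpha> w * \<bar>y\<bar>) + w * exp (- \<bar>y\<bar>))"
  shows "deriv_dominated I n (\<lambda>w y. exp (- \<alpha> w * \<bar>y\<bar>)) W"
proof (rule deriv_dominatedI)
  fix j
  obtain C where C: "\<forall>w\<in>I. \<forall>y. \<bar>Dk j (W w) y\<bar> \<le> C * (w ^ j * exp (- \<alpha> w * \<bar>y\<bar>) + w * exp (- \<bar>y\<bar>))"
    using bounds by blast
  have "\<bar>Dk j (W w) y\<bar> \<le> (2 * \<bar>C\<bar>) * exp (- \<alpha> w * \<bar>y\<bar>)" if w: "w \<in> I" for w y
  proof -
    have "\<bar>Dk j (W w) y\<bar> \<le> C * (w ^ j * exp (- \<alpha> w * \<bar>y\<bar>) + w * exp (- \<bar>y\<bar>))"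
      using C w by blast
    also have "\<dots> \<le> \<bar>C\<bar> * (w ^ j * exp (- \<alpha> w * \<bar>y\<bar>) + w * exp (- \<bar>y\<bar>))"
      using range[OF w] by (intro mult_right_mono) auto
    also have "\<dots> \<le> \<bar>C\<bar> * (2 * exp (- \<alpha> w * \<bar>y\<bar>))"
      using range[OF w] by (intro mult_left_mono mode_weight_le) auto
    finally show ?thesis by simp
  qed
  then show "\<exists>C. \<forall>w\<in>I. \<forall>y. \<bar>Dk j (W w) y\<bar> \<le> C * exp (- \<alpha> w * \<bar>y\<bar>)"
    by blast
qed (auto simp: smooth)

lemma eventually_at_right_0_interval:
  fixes \<omega>1 :: real
  assumes "\<forall>\<^sub>F w in at_right 0. P w" "0 < \<omega>1"
  shows "\<exists>\<omega>0>0. \<omega>0 \<le> \<omega>1 \<and> (\<forall>w\<in>{0<..<\<omega>0}. P w)"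
proof -
  obtain b where "b > 0" "\<And>w. 0 < w \<Longrightarrow> w < b \<Longrightarrow> P w"
    using assms(1) unfolding eventually_at_right_field by auto
  with assms(2) show ?thesis
    by (intro exI[of _ "min b \<omega>1"]) auto
qed

lemma small_freq_bounds:
  fixes \<omega>1 :: real and \<alpha> :: "real \<Rightarrow> real" and W2 :: "real \<Rightarrow> real \<Rightarrow> real"
  assumes "\<omega>1 > 0"
    and \<alpha>_asym: "\<exists>C. \<forall>w\<in>{0<..<\<omega>1}. \<bar>\<alpha> w - 8/9 * w\<bar> \<le> C * w\<^sup>2"
    and W2_approx: "\<exists>C. \<forall>w\<in>{0<..<\<omega>1}. \<forall>y.
                \<bar>W2 w y - exp (- \<alpha> w * \<bar>y\<bar>)\<bar> \<le> C * w * exp (- \<alpha> w * \<bar>y\<bar>)"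
  shows "\<exists>\<omega>0>0. \<omega>0 \<le> \<omega>1 \<and>
    (\<forall>w\<in>{0<..<\<omega>0}. w \<le> 1 \<and> \<alpha> w \<le> 1 \<and> (\<forall>y. exp (- \<alpha> w * \<bar>y\<bar>) / 2 \<le> W2 w y))"
proof -
  obtain Ca where Ca: "\<forall>w\<in>{0<..<\<omega>1}. \<bar>\<alpha> w - 8/9 * w\<bar> \<le> Ca * w\<^sup>2"
    using \<alpha>_asym by blast
  obtain C3 where C3: "\<forall>w\<in>{0<..<\<omega>1}. \<forall>y. \<bar>W2 w y - exp (- \<alpha> w * \<bar>y\<bar>)\<bar> \<le> C3 * w * exp (- \<alpha> w * \<bar>y\<bar>)"
    using W2_approx by blast
  have "\<forall>\<^sub>F w in at_right 0. w < 1 \<and> C3 * w < 1 / 2 \<and> Ca * w\<^sup>2 + 8/9 * w < (1 :: real)"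
    by (intro eventually_conj order_tendstoD(2)[where y = 0]) (real_asymp | simp)+
  then obtain \<omega>0 where "\<omega>0 > 0" "\<omega>0 \<le> \<omega>1"
    and small: "\<And>w. w \<in> {0<..<\<omega>0} \<Longrightarrow> w < 1 \<and> C3 * w < 1 / 2 \<and> Ca * w\<^sup>2 + 8/9 * w < 1"
    using eventually_at_right_0_interval \<open>\<omega>1 > 0\<close> by blast
  have "w \<le> 1 \<and> \<alpha> w \<le> 1 \<and> (\<forall>y. exp (- \<alpha> w * \<bar>y\<bar>) / 2 \<le> W2 w y)" if w: "w \<in> {0<..<\<omega>0}" for w
  proof (intro conjI allI)
    have w1: "w \<in> {0<..<\<omega>1}"
      using w \<open>\<omega>0 \<le> \<omega>1\<close> by auto
    show "w \<le> 1"
      using small[OF w] by simp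
    have "\<alpha> w - 8/9 * w \<le> Ca * w\<^sup>2"
      using Ca w1 abs_le_D1 by blast
    then show "\<alpha> w \<le> 1"
      using small[OF w] by linarith
    fix y
    have "C3 * w * exp (- \<alpha> w * \<bar>y\<bar>) \<le> 1 / 2 * exp (- \<alpha> w * \<bar>y\<bar>)"
      using small[OF w] by (intro mult_right_mono) auto
    moreover have "\<bar>W2 w y - exp (- \<alpha> w * \<bar>y\<bar>)\<bar> \<le> C3 * w * exp (- \<alpha> w * \<bar>y\<bar>)"
      using C3 w1 by blast
    ultimately show "exp (- \<alpha> w * \<bar>y\<bar>) / 2 \<le> W2 w y"
      unfolding abs_le_iff by linarith
  qed
  with \<open>\<omega>0 > 0\<close> \<open>\<omega>0 \<le> \<omega>1\<close> show ?thesis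
    by blast
qed

lemma internal_mode_for_small_freq:
  fixes \<omega>1 :: real and \<alpha> :: "real \<Rightarrow> real" and W1 W2 :: "real \<Rightarrow> real \<Rightarrow> real"
  assumes "\<omega>1 > 0"
    and \<alpha>_pos: "\<forall>w\<in>{0<..<\<omega>1}. \<alpha> w > 0"
    and \<alpha>_asym: "\<exists>C. \<forall>w\<in>{0<..<\<omega>1}. \<bar>\<alpha> w - 8/9 * w\<bar> \<le> C * w\<^sup>2"
    and W1_smooth: "smooth2_on ({0<..<\<omega>1} \<times> UNIV) W1"
    and W2_smooth: "smooth2_on ({0<..<\<omega>1} \<times> UNIV) W2"
    and eq1: "\<forall>w\<in>{0<..<\<omega>1}. \<forall>y. Mplus w (W1 w) y = (1 - (\<alpha> w)\<^sup>2) * W2 w y"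
    and eq2: "\<forall>w\<in>{0<..<\<omega>1}. \<forall>y. Mminus w (W2 w) y = (1 - (\<alpha> w)\<^sup>2) * W1 w y"
    and bd1: "\<forall>k. \<exists>C. \<forall>w\<in>{0<..<\<omega>1}. \<forall>y.
                \<bar>Dk k (W1 w) y\<bar> \<le> C * (w ^ k * exp (- \<alpha> w * \<bar>y\<bar>) + w * exp (- \<bar>y\<bar>)) \<and>
                \<bar>Dk k (W2 w) y\<bar> \<le> C * (w ^ k * exp (- \<alpha> w * \<bar>y\<bar>) + w * exp (- \<bar>y\<bar>))"
    and bd2: "\<forall>k. \<exists>C. \<forall>w\<in>{0<..<\<omega>1}. \<forall>y.
                \<bar>Dk k (\<lambda>y. W1 w y - W2 w y) y\<bar> \<le> C * w * exp (- sqrt (2 - (\<alpha> w)\<^sup>2) * \<bar>y\<bar>)"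
    and W2_approx: "\<exists>C. \<forall>w\<in>{0<..<\<omega>1}. \<forall>y.
                \<bar>W2 w y - exp (- \<alpha> w * \<bar>y\<bar>)\<bar> \<le> C * w * exp (- \<alpha> w * \<bar>y\<bar>)"
  shows "\<exists>\<omega>0>0. \<omega>0 \<le> \<omega>1 \<and> internal_mode {0<..<\<omega>0} \<alpha> W1 W2"
proof -
  obtain \<omega>0 where "\<omega>0 > 0" "\<omega>0 \<le> \<omega>1" and small:
      "\<forall>w\<in>{0<..<\<omega>0}. w \<le> 1 \<and> \<alpha> w \<le> 1 \<and> (\<forall>y. exp (- \<alpha> w * \<bar>y\<bar>) / 2 \<le> W2 w y)"
    using small_freq_bounds[OF \<open>\<omega>1 > 0\<close> \<alpha>_asym W2_approx] by blast
  define I where "I = {0<..<\<omega>0}"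
  have in_I: "w \<in> {0<..<\<omega>1} \<and> w \<le> 1 \<and> \<alpha> w \<le> 1 \<and> (\<forall>y. exp (- \<alpha> w * \<bar>y\<bar>) / 2 \<le> W2 w y)"
    if "w \<in> I" for w
    using that small \<open>\<omega>0 \<le> \<omega>1\<close> by (auto simp: I_def)
  have range: "0 < w \<and> w \<le> 1 \<and> 0 < \<alpha> w \<and> \<alpha> w \<le> 1" if "w \<in> I" for w
    using in_I[OF that] \<alpha>_pos by auto
  have smooth: "smooth_fun (W1 w)" "smooth_fun (W2 w)" if "w \<in> I" for w
    using smooth2_on_imp_smooth_fun W1_smooth W2_smooth in_I[OF that] by auto
  have "internal_mode I \<alpha> W1 W2"
  proof
    show "0 < w \<and> w \<le> 1" "0 < \<alpha> w \<and> \<alpha> w \<le> 1" if "w \<in> I" for w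
      using range[OF that] by auto
    show "deriv_dominated I n (\<lambda>w y. exp (- \<alpha> w * \<bar>y\<bar>)) W1" for n
      using bd1 in_I by (intro deriv_dominated_of_mode_bounds smooth range) fastforce+
    show "deriv_dominated I n (\<lambda>w y. exp (- \<alpha> w * \<bar>y\<bar>)) W2" for n
      using bd1 in_I by (intro deriv_dominated_of_mode_bounds smooth range) fastforce+
    show "deriv_dominated I n (\<lambda>w y. w * exp (- sqrt (2 - (\<alpha> w)\<^sup>2) * \<bar>y\<bar>)) (\<lambda>w y. W1 w y - W2 w y)" for n
    proof (rule deriv_dominatedI)
      show "\<exists>C. \<forall>w\<in>I. \<forall>y. \<bar>Dk j (\<lambda>y. W1 w y - W2 w y) y\<bar> \<le> C * (w * exp (- sqrt (2 - (\<alpha> w)\<^sup>2) * \<bar>y\<bar>))" for j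
        using bd2 in_I by (fastforce simp: mult.assoc)
    qed (auto simp: smooth dest: range)
    show "exp (- \<alpha> w * \<bar>y\<bar>) / 2 \<le> W2 w y" if "w \<in> I" for w y
      using in_I[OF that] by blast
    show "Mplus w (W1 w) = (\<lambda>y. (1 - (\<alpha> w)\<^sup>2) * W2 w y)" "Mminus w (W2 w) = (\<lambda>y. (1 - (\<alpha> w)\<^sup>2) * W1 w y)"
      if "w \<in> I" for w
      using eq1 eq2 in_I[OF that] by auto
  qed
  with \<open>\<omega>0 > 0\<close> \<open>\<omega>0 \<le> \<omega>1\<close> show ?thesis
    unfolding I_def by blast
qed

theorem lemma3:
  fixes \<omega>1 :: real and \<alpha> :: "real \<Rightarrow> real" and W1 W2 :: "real \<Rightarrow> real \<Rightarrow> real"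
  assumes \<omega>1_pos: "\<omega>1 > 0"
    and \<alpha>_smooth: "smooth_on1 {0<..<\<omega>1} \<alpha>"
    and \<alpha>_pos: "\<forall>w\<in>{0<..<\<omega>1}. \<alpha> w > 0"
    and \<alpha>_asym: "\<exists>C. \<forall>w\<in>{0<..<\<omega>1}. \<bar>\<alpha> w - 8/9 * w\<bar> \<le> C * w\<^sup>2"
    and W1_smooth: "smooth2_on ({0<..<\<omega>1} \<times> UNIV) W1"
    and W2_smooth: "smooth2_on ({0<..<\<omega>1} \<times> UNIV) W2"
    and W1_even: "\<forall>w\<in>{0<..<\<omega>1}. \<forall>y. W1 w (- y) = W1 w y"
    and W2_even: "\<forall>w\<in>{0<..<\<omega>1}. \<forall>y. W2 w (- y) = W2 w y"
    and eq1: "\<forall>w\<in>{0<..<\<omega>1}. \<forall>y. Mplus w (W1 w) y = (1 - (\<alpha> w)\<^sup>2) * W2 w y"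
    and eq2: "\<forall>w\<in>{0<..<\<omega>1}. \<forall>y. Mminus w (W2 w) y = (1 - (\<alpha> w)\<^sup>2) * W1 w y"
    and bd1: "\<forall>k. \<exists>C. \<forall>w\<in>{0<..<\<omega>1}. \<forall>y.
                \<bar>Dk k (W1 w) y\<bar> \<le> C * (w ^ k * exp (- \<alpha> w * \<bar>y\<bar>) + w * exp (- \<bar>y\<bar>)) \<and>
                \<bar>Dk k (W2 w) y\<bar> \<le> C * (w ^ k * exp (- \<alpha> w * \<bar>y\<bar>) + w * exp (- \<bar>y\<bar>))"
    and bd2: "\<forall>k. \<exists>C. \<forall>w\<in>{0<..<\<omega>1}. \<forall>y.
                \<bar>Dk k (\<lambda>y. W1 w y - W2 w y) y\<bar> \<le> C * w * exp (- sqrt (2 - (\<alpha> w)\<^sup>2) * \<bar>y\<bar>)"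
    and bd3: "\<exists>C. \<forall>w\<in>{0<..<\<omega>1}. \<forall>y.
                \<bar>W1 w y - exp (- \<alpha> w * \<bar>y\<bar>)\<bar> \<le> C * w * exp (- \<alpha> w * \<bar>y\<bar>) \<and>
                \<bar>W2 w y - exp (- \<alpha> w * \<bar>y\<bar>)\<bar> \<le> C * w * exp (- \<alpha> w * \<bar>y\<bar>)"
  shows "\<exists>\<omega>0>0. \<omega>0 \<le> \<omega>1 \<and> (\<exists>K2 K1 K0 :: real \<Rightarrow> real \<Rightarrow> real.
           (\<forall>w\<in>{0<..<\<omega>0}. smooth_fun (K2 w) \<and> smooth_fun (K1 w) \<and> smooth_fun (K0 w) \<and>
              (\<forall>f. smooth_fun f \<longrightarrow>
                 Uop (W2 w) (Mplus w (Mminus w f)) = Kop (K2 w) (K1 w) (K0 w) (Uop (W2 w) f))) \<and>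
           (\<forall>k. \<exists>C. \<forall>w\<in>{0<..<\<omega>0}. \<forall>y.
              \<bar>Dk k (K2 w) y\<bar> + \<bar>Dk k (K1 w) y\<bar> + \<bar>Dk k (K0 w) y\<bar>
                \<le> C * w * exp (- (sqrt (2 - (\<alpha> w)\<^sup>2) - \<alpha> w) * \<bar>y\<bar>)))"
proof -
  have W2_approx: "\<exists>C. \<forall>w\<in>{0<..<\<omega>1}. \<forall>y.
      \<bar>W2 w y - exp (- \<alpha> w * \<bar>y\<bar>)\<bar> \<le> C * w * exp (- \<alpha> w * \<bar>y\<bar>)"
    using bd3 by meson
  obtain \<omega>0 where "\<omega>0 > 0" "\<omega>0 \<le> \<omega>1" and mode: "internal_mode {0<..<\<omega>0} \<alpha> W1 W2"
    using internal_mode_for_small_freq[OF \<omega>1_pos \<alpha>_pos \<alpha>_asym W1_smooth W2_smooth eq1 eq2 bd1 bd2 W2_approx]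
    by blast
  then show ?thesis
    using internal_mode.conjugation_identity_and_bounds[OF mode] by blast
qed

end
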